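(* For every ground state $s\in\mathcal{S}$ and every level $\mathfrak{h}\ge1$ of the hierarchy (i.e. every $\mathfrak{h}\in[1,\mathfrak{m}]$), there exists $\mathcal{P}\in\mathscr{P}^{\star,\mathfrak{h}}_{\rm rec}$ with $s\in\mathcal{P}$. In other words, the unique element of $\mathscr{P}^{\star,\mathfrak{h}}$ containing $s$ belongs to one of the closed communicating classes of $\mathfrak{X}^{\star,\mathfrak{h}}$, not to the transient set.
   Context: Setting. Let $\Omega$ be a finite set with a connected undirected graph structure; write $\eta\sim\xi$ if $\{\eta,\xi\}$ is an edge. Let $\mathbb{H}:\Omega\to\mathbb{R}$. Paths and heights. A path $\omega:\eta\to\xi$ is a sequence $(\omega_n)_{n=0}^N$ with $\omega_0=\eta$, $\omega_N=\xi$ and $\omega_n\sim\omega_{n+1}$ ($N=0$ allowed). Its height is $\Phi_\omega:=\max_n\mathbb{H}(\omega_n)$. Set $\Phi(\eta,\xi):=\min_{\omega:\eta\to\xi}\Phi_\omega$. For nonempty sets, $\Phi(\mathcal{A},\mathcal{B}):=\min_{\eta\in\mathcal{A},\xi\in\mathcal{B}}\Phi(\eta,\xi)$, and $\Phi(\mathcal{A},\eta):=\Phi(\mathcal{A},\{\eta\})$. Ground states. $\mathcal{S}:=\operatorname{argmin}_\Omega\mathbb{H}$, $\overline{\Phi}:=\max_{s,s'\in\mathcal{S}}\Phi(s,s')$, and $\overline{\Omega}:=\{\eta:\Phi(\mathcal{S},\eta)\le\overline{\Phi}\}$. Sets. For $\mathcal{A}\subseteq\Omega$: $\mathcal{F}(\mathcal{A}):=\operatorname{argmin}_{\mathcal{A}}\mathbb{H}$;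 $\partial\mathcal{A}:=\{\eta\notin\mathcal{A}:\eta\sim\xi\text{ for some }\xi\in\mathcal{A}\}$; $\partial^\star\mathcal{A}:=\mathcal{F}(\partial\mathcal{A})$. A set is connected if any two of its points are joined by a path inside it. Stable plateaux and cycles. A stable plateau is a nonempty connected set $\mathcal{P}$ with constant energy $\mathbb{H}(\mathcal{P})$ such that $\mathbb{H}>\mathbb{H}(\mathcal{P})$ on $\partial\mathcal{P}$. A cycle is a nonempty connected $\mathcal{C}$ with $\max_{\mathcal{C}}\mathbb{H}<\min_{\partial\mathcal{C}}\mathbb{H}$. Its depth is $\Gamma^{\mathcal{C}}:=\min_{\partial\mathcal{C}}\mathbb{H}-\min_{\mathcal{C}}\mathbb{H}$. General construction (C). Let $\mathscr{C}$ be a collection of pairwise disjoint cycles contained in $\overline{\Omega}$ with $|\mathscr{C}|\ge2$, and let $\Gamma^\star>0$. Put - $\mathscr{C}^\star:=\{\mathcal{C}\in\mathscr{C}:\Gamma^{\mathcal{C}}\ge\Gamma^\star\}$ and $\mathscr{C}^\sharp:=\{\mathcal{C}\in\mathscr{C}:\Gamma^{\mathcal{C}}<\Gamma^\star\}$; - $\mathscr{P}^{\mathscr{C}}:=\{\mathcal{F}(\mathcal{C}):\mathcal{C}\in\mathscr{C}\}$ and $\mathscr{P}^{\mathscr{C}^\star}:=\{\mathcal{F}(\mathcal{C}):\mathcal{C}\in\mathscr{C}^\star\}$; - $\Delta^{\mathscr{C}}:=\overline{\Omega}\setminus\bigcup_{\mathcal{C}\in\mathscr{C}}\mathcal{C}$.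 Let $\mathfrak{X}^{\mathscr{C}}$ be the continuous-time Markov chain on $\Omega^{\mathscr{C}}:=\Delta^{\mathscr{C}}\cup\mathscr{P}^{\mathscr{C}}$, in which each $\mathcal{F}(\mathcal{C})$ is treated as a single point. Its rates are: - $\mathfrak{R}^{\mathscr{C}}(\eta,\xi)=1$ for $\eta,\xi\in\Delta^{\mathscr{C}}$ with $\eta\sim\xi$ and $\mathbb{H}(\xi)\le\mathbb{H}(\eta)$; - $\mathfrak{R}^{\mathscr{C}}(\eta,\mathcal{F}(\mathcal{C}))=|\{\zeta\in\mathcal{C}:\eta\sim\zeta\}|$ for $\eta\in\Delta^{\mathscr{C}}\cap\partial\mathcal{C}$; - $\mathfrak{R}^{\mathscr{C}}(\mathcal{F}(\mathcal{C}),\eta)=|\mathcal{F}(\mathcal{C})|^{-1}|\{\zeta\in\mathcal{C}:\eta\sim\zeta\}|$ if $\Gamma^{\mathcal{C}}\le\Gamma^\star$ and $\eta\in\partial^\star\mathcal{C}$; - all other rates are $0$. The trace chain $\mathfrak{X}^{\mathscr{C}^\star}$ on $\mathscr{P}^{\mathscr{C}^\star}$ has rates, for distinct $\mathcal{C},\mathcal{C}'\in\mathscr{C}^\star$, $$\mathfrak{R}^{\mathscr{C}^\star}(\mathcal{F}(\mathcal{C}),\mathcal{F}(\mathcal{C}')):=\sum_{\eta\in\Delta^{\mathscr{C}}}\mathfrak{R}^{\mathscr{C}}(\mathcal{F}(\mathcal{C}),\eta)\,\mathbf{P}^{\mathscr{C}}_\eta[\mathcal{T}_{\mathcal{F}(\mathcal{C}')}=\mathcal{T}_{\mathscr{P}^{\mathscr{C}^\star}}].$$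 Here $\mathbf{P}^{\mathscr{C}}_\eta$ is the law of $\mathfrak{X}^{\mathscr{C}}$ started at $\eta$, and $\mathcal{T}_{\mathcal{A}}$ is the hitting time of $\mathcal{A}$. Hierarchy. Let $\mathscr{P}^1=\{\mathcal{P}_1^1,\dots,\mathcal{P}^1_{\nu_0}\}$ be the collection of all stable plateaux contained in $\overline{\Omega}$, and assume $\nu_0\ge2$. Suppose that at some level $\mathfrak{h}\ge1$ the sets $\mathcal{P}^{\mathfrak{h}}_1,\dots,\mathcal{P}^{\mathfrak{h}}_{\nu_{\mathfrak{h}-1}}$ are defined, with $\nu_{\mathfrak{h}-1}\ge2$. Then define: - $\mathbb{H}(\mathcal{P}^{\mathfrak{h}}_i):=\min_{\mathcal{P}^{\mathfrak{h}}_i}\mathbb{H}$; - $\mathscr{P}^{\star,\mathfrak{h}}:=\{\mathcal{P}^{\mathfrak{h}}_i:i\in[1,\nu_{\mathfrak{h}-1}]\}$; - $\breve{\mathcal{P}}^{\mathfrak{h}}_i:=\bigcup_{j\ne i}\mathcal{P}^{\mathfrak{h}}_j$; - $\Gamma^{\mathfrak{h}}_i:=\Phi(\mathcal{P}^{\mathfrak{h}}_i,\breve{\mathcal{P}}^{\mathfrak{h}}_i)-\mathbb{H}(\mathcal{P}^{\mathfrak{h}}_i)$ and $\Gamma^{\star,\mathfrak{h}}:=\min_i\Gamma_i^{\mathfrak{h}}$; - $\mathcal{V}^{\mathfrak{h}}_i:=\{\eta\in\Omega:\Phi(\mathcal{P}^{\mathfrak{h}}_i,\eta)-\mathbb{H}(\mathcal{P}^{\mathfrak{h}}_i)<\Gamma^{\mathfrak{h}}_i\}$.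 Set $\mathscr{C}^1:=\{\mathcal{V}^1_i:i\in[1,\nu_0]\}$. For $\mathfrak{h}\ge2$, set $$\mathscr{C}^{\mathfrak{h}}:=\{\mathcal{V}^{\mathfrak{h}}_i:i\in[1,\nu_{\mathfrak{h}-1}]\}\cup\{\mathcal{C}\in\mathscr{C}^{\star,\mathfrak{h}-1}_{\rm tr}\cup\mathscr{C}^{\sharp,\mathfrak{h}-1}:\mathcal{C}\cap\mathcal{V}^{\mathfrak{h}}_i=\emptyset\ \forall i\}.$$ Apply (C) to $(\mathscr{C}^{\mathfrak{h}},\Gamma^{\star,\mathfrak{h}})$. Write $\mathscr{C}^{\star,\mathfrak{h}}:=(\mathscr{C}^{\mathfrak{h}})^\star$ and $\mathscr{C}^{\sharp,\mathfrak{h}}:=(\mathscr{C}^{\mathfrak{h}})^\sharp$. Let $\mathfrak{X}^{\star,\mathfrak{h}}$ be the trace chain of (C) on $\mathscr{P}^{(\mathscr{C}^{\mathfrak{h}})^\star}$. Decompose $\mathscr{P}^{(\mathscr{C}^{\mathfrak{h}})^\star}$ into the closed communicating classes $\mathscr{P}^{\star,\mathfrak{h}}_1,\dots,\mathscr{P}^{\star,\mathfrak{h}}_{\nu_{\mathfrak{h}}}$ of $\mathfrak{X}^{\star,\mathfrak{h}}$ and the set $\mathscr{P}^{\star,\mathfrak{h}}_{\rm tr}$ of transient elements. Let $\mathscr{C}^{\star,\mathfrak{h}}_m:=\{\mathcal{C}\in\mathscr{C}^{\star,\mathfrak{h}}:\mathcal{F}(\mathcal{C})\in\mathscr{P}^{\star,\mathfrak{h}}_m\}$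 for $m\in\{1,\dots,\nu_{\mathfrak{h}},{\rm tr}\}$. If $\nu_{\mathfrak{h}}\ge2$, define $\mathcal{P}^{\mathfrak{h}+1}_i:=\bigcup_{\mathcal{P}\in\mathscr{P}^{\star,\mathfrak{h}}_i}\mathcal{P}$ for $i\in[1,\nu_{\mathfrak{h}}]$ and continue to level $\mathfrak{h}+1$. The terminal level $\mathfrak{m}$ is the first $\mathfrak{h}$ with $\nu_{\mathfrak{h}}=1$. Finally, $\mathscr{P}^{\star,\mathfrak{h}}_{\rm rec}:=\mathscr{P}^{\star,\mathfrak{h}}_1\cup\dots\cup\mathscr{P}^{\star,\mathfrak{h}}_{\nu_{\mathfrak{h}}}$. Here $[a,b]$ denotes the set of integers from $a$ to $b$. *)

theory Defs
  imports "HOL-Analysis.Analysis" "HOL-Library.Extended_Real"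
begin

(* Omega is the finite type 'a; E is the (symmetric) adjacency relation; H the energy. *)

definition is_path :: "('a \<Rightarrow> 'a \<Rightarrow> bool) \<Rightarrow> 'a list \<Rightarrow> bool" where
  "is_path E w \<longleftrightarrow> w \<noteq> [] \<and> (\<forall>i. Suc i < length w \<longrightarrow> E (w ! i) (w ! Suc i))"

definition path_height :: "('a \<Rightarrow> real) \<Rightarrow> 'a list \<Rightarrow> real" where
  "path_height H w = Max (H ` set w)"

definition Phi :: "('a \<Rightarrow> 'a \<Rightarrow> bool) \<Rightarrow> ('a \<Rightarrow> real) \<Rightarrow> 'a \<Rightarrow> 'a \<Rightarrow> real" where
  "Phi E H x y = Min {path_height H w | w. is_path E w \<and> hd w = x \<and> last w = y}"

definition PhiS :: "('a \<Rightarrow> 'a \<Rightarrow> bool) \<Rightarrow> ('a \<Rightarrow> real) \<Rightarrow> 'a set \<Rightarrow> 'a set \<Rightarrow> real" where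
  "PhiS E H A B = Min {Phi E H x y | x y. x \<in> A \<and> y \<in> B}"

definition ground :: "('a \<Rightarrow> real) \<Rightarrow> 'a set" where
  "ground H = {x. \<forall>y. H x \<le> H y}"

definition Phibar :: "('a \<Rightarrow> 'a \<Rightarrow> bool) \<Rightarrow> ('a \<Rightarrow> real) \<Rightarrow> real" where
  "Phibar E H = Max {Phi E H s s' | s s'. s \<in> ground H \<and> s' \<in> ground H}"

definition Omegabar :: "('a \<Rightarrow> 'a \<Rightarrow> bool) \<Rightarrow> ('a \<Rightarrow> real) \<Rightarrow> 'a set" where
  "Omegabar E H = {x. PhiS E H (ground H) {x} \<le> Phibar E H}"

definition Fmin :: "('a \<Rightarrow> real) \<Rightarrow> 'a set \<Rightarrow> 'a set" where
  "Fmin H A = {x \<in> A. \<forall>y\<in>A. H x \<le> H y}"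

definition bd :: "('a \<Rightarrow> 'a \<Rightarrow> bool) \<Rightarrow> 'a set \<Rightarrow> 'a set" where
  "bd E A = {x. x \<notin> A \<and> (\<exists>y\<in>A. E x y)}"

definition bdstar :: "('a \<Rightarrow> 'a \<Rightarrow> bool) \<Rightarrow> ('a \<Rightarrow> real) \<Rightarrow> 'a set \<Rightarrow> 'a set" where
  "bdstar E H A = Fmin H (bd E A)"

definition conn_set :: "('a \<Rightarrow> 'a \<Rightarrow> bool) \<Rightarrow> 'a set \<Rightarrow> bool" where
  "conn_set E A \<longleftrightarrow> (\<forall>x\<in>A. \<forall>y\<in>A. \<exists>w. is_path E w \<and> hd w = x \<and> last w = y \<and> set w \<subseteq> A)"

definition stable_plateau :: "('a \<Rightarrow> 'a \<Rightarrow> bool) \<Rightarrow> ('a \<Rightarrow> real) \<Rightarrow> 'a set \<Rightarrow> bool" where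
  "stable_plateau E H P \<longleftrightarrow> P \<noteq> {} \<and> conn_set E P \<and> (\<forall>x\<in>P. \<forall>y\<in>P. H x = H y)
     \<and> (\<forall>x\<in>P. \<forall>y\<in>bd E P. H x < H y)"

definition is_cycle :: "('a \<Rightarrow> 'a \<Rightarrow> bool) \<Rightarrow> ('a \<Rightarrow> real) \<Rightarrow> 'a set \<Rightarrow> bool" where
  "is_cycle E H C \<longleftrightarrow> C \<noteq> {} \<and> conn_set E C \<and> (\<forall>x\<in>C. \<forall>y\<in>bd E C. H x < H y)"

definition depth :: "('a \<Rightarrow> 'a \<Rightarrow> bool) \<Rightarrow> ('a \<Rightarrow> real) \<Rightarrow> 'a set \<Rightarrow> ereal" where
  "depth E H C = (if bd E C = {} then \<infinity> else ereal (Min (H ` bd E C) - Min (H ` C)))"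

text \<open>States of the collapsed chain are sets: a point eta of Delta is represented by {eta},
  a collapsed bottom F(C) by the set F(C) itself (these never coincide).\<close>

definition Delta :: "('a \<Rightarrow> 'a \<Rightarrow> bool) \<Rightarrow> ('a \<Rightarrow> real) \<Rightarrow> 'a set set \<Rightarrow> 'a set" where
  "Delta E H Cc = Omegabar E H - \<Union> Cc"

definition cstates :: "('a \<Rightarrow> 'a \<Rightarrow> bool) \<Rightarrow> ('a \<Rightarrow> real) \<Rightarrow> 'a set set \<Rightarrow> 'a set set" where
  "cstates E H Cc = (\<lambda>x. {x}) ` Delta E H Cc \<union> Fmin H ` Cc"

definition crate :: "('a \<Rightarrow> 'a \<Rightarrow> bool) \<Rightarrow> ('a \<Rightarrow> real) \<Rightarrow> 'a set set \<Rightarrow> real \<Rightarrow> 'a set \<Rightarrow> 'a set \<Rightarrow> real" where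
  "crate E H Cc G x y =
    (if x \<in> (\<lambda>z. {z}) ` Delta E H Cc \<and> y \<in> (\<lambda>z. {z}) ` Delta E H Cc then
       (let \<eta> = the_elem x; \<xi> = the_elem y in
        if \<eta> \<noteq> \<xi> \<and> E \<eta> \<xi> \<and> H \<xi> \<le> H \<eta> then 1 else 0)
     else if x \<in> (\<lambda>z. {z}) ` Delta E H Cc \<and> y \<in> Fmin H ` Cc then
       (let \<eta> = the_elem x; C = (SOME C. C \<in> Cc \<and> y = Fmin H C) in
        if \<eta> \<in> bd E C then real (card {\<zeta> \<in> C. E \<eta> \<zeta>}) else 0)
     else if x \<in> Fmin H ` Cc \<and> y \<in> (\<lambda>z. {z}) ` Delta E H Cc then
       (let \<eta> = the_elem y; C = (SOME C. C \<in> Cc \<and> x = Fmin H C) in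
        if depth E H C \<le> ereal G \<and> \<eta> \<in> bdstar E H C
        then real (card {\<zeta> \<in> C. E \<eta> \<zeta>}) / real (card x) else 0)
     else 0)"

text \<open>Probability that the (jump chain of the) collapsed chain started at x hits the set of
  states A for the first time at the state t, within n jumps.\<close>
fun hitn :: "('a \<Rightarrow> 'a \<Rightarrow> bool) \<Rightarrow> ('a \<Rightarrow> real) \<Rightarrow> 'a set set \<Rightarrow> real \<Rightarrow> 'a set set \<Rightarrow> 'a set
    \<Rightarrow> nat \<Rightarrow> 'a set \<Rightarrow> real" where
  "hitn E H Cc G A t 0 x = (if x = t then 1 else 0)"
| "hitn E H Cc G A t (Suc n) x =
     (if x = t then 1 else if x \<in> A then 0 else
      (let q = (\<Sum>y\<in>cstates E H Cc. crate E H Cc G x y) in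
       if q = 0 then 0 else (\<Sum>y\<in>cstates E H Cc. crate E H Cc G x y / q * hitn E H Cc G A t n y)))"

definition hitprob :: "('a \<Rightarrow> 'a \<Rightarrow> bool) \<Rightarrow> ('a \<Rightarrow> real) \<Rightarrow> 'a set set \<Rightarrow> real \<Rightarrow> 'a set set \<Rightarrow> 'a set
    \<Rightarrow> 'a set \<Rightarrow> real" where
  "hitprob E H Cc G A t x = (SUP n. hitn E H Cc G A t n x)"

definition Cstar :: "('a \<Rightarrow> 'a \<Rightarrow> bool) \<Rightarrow> ('a \<Rightarrow> real) \<Rightarrow> 'a set set \<Rightarrow> real \<Rightarrow> 'a set set" where
  "Cstar E H Cc G = {C \<in> Cc. depth E H C \<ge> ereal G}"

definition Csharp :: "('a \<Rightarrow> 'a \<Rightarrow> bool) \<Rightarrow> ('a \<Rightarrow> real) \<Rightarrow> 'a set set \<Rightarrow> real \<Rightarrow> 'a set set" where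
  "Csharp E H Cc G = {C \<in> Cc. depth E H C < ereal G}"

definition Pstar :: "('a \<Rightarrow> 'a \<Rightarrow> bool) \<Rightarrow> ('a \<Rightarrow> real) \<Rightarrow> 'a set set \<Rightarrow> real \<Rightarrow> 'a set set" where
  "Pstar E H Cc G = Fmin H ` Cstar E H Cc G"

text \<open>Rates of the trace chain on P^{C*}.\<close>
definition trate :: "('a \<Rightarrow> 'a \<Rightarrow> bool) \<Rightarrow> ('a \<Rightarrow> real) \<Rightarrow> 'a set set \<Rightarrow> real \<Rightarrow> 'a set \<Rightarrow> 'a set \<Rightarrow> real" where
  "trate E H Cc G P P' =
     (\<Sum>\<eta>\<in>Delta E H Cc. crate E H Cc G P {\<eta>} * hitprob E H Cc G (Pstar E H Cc G) P' {\<eta>})"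

definition treach :: "('a \<Rightarrow> 'a \<Rightarrow> bool) \<Rightarrow> ('a \<Rightarrow> real) \<Rightarrow> 'a set set \<Rightarrow> real \<Rightarrow> ('a set \<times> 'a set) set" where
  "treach E H Cc G = {(P, P'). P \<in> Pstar E H Cc G \<and> P' \<in> Pstar E H Cc G \<and> P \<noteq> P'
                                \<and> trate E H Cc G P P' > 0}"

text \<open>Recurrent states of the trace chain = union of its closed communicating classes.\<close>
definition Prec :: "('a \<Rightarrow> 'a \<Rightarrow> bool) \<Rightarrow> ('a \<Rightarrow> real) \<Rightarrow> 'a set set \<Rightarrow> real \<Rightarrow> 'a set set" where
  "Prec E H Cc G = {P \<in> Pstar E H Cc G. \<forall>P'. (P, P') \<in> (treach E H Cc G)\<^sup>* \<longrightarrow> (P', P) \<in> (treach E H Cc G)\<^sup>*}"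

definition Ptr :: "('a \<Rightarrow> 'a \<Rightarrow> bool) \<Rightarrow> ('a \<Rightarrow> real) \<Rightarrow> 'a set set \<Rightarrow> real \<Rightarrow> 'a set set" where
  "Ptr E H Cc G = Pstar E H Cc G - Prec E H Cc G"

definition closed_classes :: "('a \<Rightarrow> 'a \<Rightarrow> bool) \<Rightarrow> ('a \<Rightarrow> real) \<Rightarrow> 'a set set \<Rightarrow> real \<Rightarrow> 'a set set set" where
  "closed_classes E H Cc G =
     {{P'. (P, P') \<in> (treach E H Cc G)\<^sup>* \<and> (P', P) \<in> (treach E H Cc G)\<^sup>*} | P. P \<in> Prec E H Cc G}"

definition Ctr :: "('a \<Rightarrow> 'a \<Rightarrow> bool) \<Rightarrow> ('a \<Rightarrow> real) \<Rightarrow> 'a set set \<Rightarrow> real \<Rightarrow> 'a set set" where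
  "Ctr E H Cc G = {C \<in> Cstar E H Cc G. Fmin H C \<in> Ptr E H Cc G}"

definition Hm :: "('a \<Rightarrow> real) \<Rightarrow> 'a set \<Rightarrow> real" where
  "Hm H P = Min (H ` P)"

definition Gam :: "('a \<Rightarrow> 'a \<Rightarrow> bool) \<Rightarrow> ('a \<Rightarrow> real) \<Rightarrow> 'a set set \<Rightarrow> 'a set \<Rightarrow> real" where
  "Gam E H Ps P = PhiS E H P (\<Union> (Ps - {P})) - Hm H P"

definition Gstar :: "('a \<Rightarrow> 'a \<Rightarrow> bool) \<Rightarrow> ('a \<Rightarrow> real) \<Rightarrow> 'a set set \<Rightarrow> real" where
  "Gstar E H Ps = Min (Gam E H Ps ` Ps)"

definition Vset :: "('a \<Rightarrow> 'a \<Rightarrow> bool) \<Rightarrow> ('a \<Rightarrow> real) \<Rightarrow> 'a set set \<Rightarrow> 'a set \<Rightarrow> 'a set" where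
  "Vset E H Ps P = {x. PhiS E H P {x} - Hm H P < Gam E H Ps P}"

definition plateaux1 :: "('a \<Rightarrow> 'a \<Rightarrow> bool) \<Rightarrow> ('a \<Rightarrow> real) \<Rightarrow> 'a set set" where
  "plateaux1 E H = {P. stable_plateau E H P \<and> P \<subseteq> Omegabar E H}"

text \<open>Data of level h: the collection {P^h_i} and the collection of cycles C^h.\<close>
fun lev :: "('a \<Rightarrow> 'a \<Rightarrow> bool) \<Rightarrow> ('a \<Rightarrow> real) \<Rightarrow> nat \<Rightarrow> 'a set set \<times> 'a set set" where
  "lev E H 0 = ({}, {})"
| "lev E H (Suc 0) = (plateaux1 E H, Vset E H (plateaux1 E H) ` plateaux1 E H)"
| "lev E H (Suc (Suc n)) =
     (let (Ps, Cc) = lev E H (Suc n); G = Gstar E H Ps;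
          Ps' = Union ` closed_classes E H Cc G
      in (Ps', Vset E H Ps' ` Ps' \<union>
               {C \<in> Ctr E H Cc G \<union> Csharp E H Cc G. \<forall>P\<in>Ps'. C \<inter> Vset E H Ps' P = {}}))"

definition levP :: "('a \<Rightarrow> 'a \<Rightarrow> bool) \<Rightarrow> ('a \<Rightarrow> real) \<Rightarrow> nat \<Rightarrow> 'a set set" where
  "levP E H h = fst (lev E H h)"

definition levC :: "('a \<Rightarrow> 'a \<Rightarrow> bool) \<Rightarrow> ('a \<Rightarrow> real) \<Rightarrow> nat \<Rightarrow> 'a set set" where
  "levC E H h = snd (lev E H h)"

definition nu :: "('a \<Rightarrow> 'a \<Rightarrow> bool) \<Rightarrow> ('a \<Rightarrow> real) \<Rightarrow> nat \<Rightarrow> nat" where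
  "nu E H h = card (closed_classes E H (levC E H h) (Gstar E H (levP E H h)))"

definition Prec_lev :: "('a \<Rightarrow> 'a \<Rightarrow> bool) \<Rightarrow> ('a \<Rightarrow> real) \<Rightarrow> nat \<Rightarrow> 'a set set" where
  "Prec_lev E H h = Prec E H (levC E H h) (Gstar E H (levP E H h))"

end

(*
  The ground state s lies in a plateau P of the current level, hence in its valley V(P), a
  cycle of depth at least Gstar, so the bottom F(V(P)) is a state of the trace chain containing s.
  That state is recurrent because every transition of the trace chain out of a bottom X
  containing a ground state g can be reversed: the chain leaves X through its lowest boundary
  point, at height exactly H g + Gstar; from there it only descends or passes through shallow
  cycles, and it can reach a deep cycle only from at least Gstar above that cycle's bottom. So the
  whole passage stays at the level H g + Gstar and can be retraced, and the bottom it reaches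
  again contains a ground state. The closed classes then form the plateaux of the next level,
  one of which contains s, and the statement follows by induction on the level.
*)
theory Submission
  imports Defs
begin

section \<open>Paths and communication heights\<close>

lemma Min_image_le: "finite S \<Longrightarrow> x \<in> S \<Longrightarrow> Min (f ` S) \<le> f x"
  by (intro Min_le) auto

lemma Min_image_attained:
  assumes "finite S" "S \<noteq> {}"
  obtains x where "x \<in> S" "f x = Min (f ` S)"
proof -
  have "Min (f ` S) \<in> f ` S" using assms by (intro Min_in) auto
  then show ?thesis using that by (metis imageE)
qed

lemma is_path_nonempty: "is_path E w \<Longrightarrow> w \<noteq> []"
  by (simp add: is_path_def)

lemma is_path_singleton [simp]: "is_path E [x]"
  by (simp add: is_path_def)

lemma is_path_snoc:
  assumes "is_path E w" "E (last w) z"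
  shows "is_path E (w @ [z])"
  unfolding is_path_def
proof (intro conjI allI impI)
  fix i assume i: "Suc i < length (w @ [z])"
  have "w \<noteq> []" using assms(1) by (rule is_path_nonempty)
  show "E ((w @ [z]) ! i) ((w @ [z]) ! Suc i)"
  proof (cases "Suc i < length w")
    case True
    then show ?thesis using assms(1) by (simp add: is_path_def nth_append)
  next
    case False
    then have "i = length w - 1" using i by simp
    then show ?thesis using assms(2) \<open>w \<noteq> []\<close> by (simp add: nth_append last_conv_nth)
  qed
qed simp

lemma is_path_butlast:
  assumes "is_path E (w @ [z])" "w \<noteq> []"
  shows "is_path E w" "E (last w) z"
proof -
  have edge: "E ((w @ [z]) ! i) ((w @ [z]) ! Suc i)" if "Suc i < Suc (length w)" for i
    using assms(1) that unfolding is_path_def by simp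
  show "is_path E w" unfolding is_path_def
  proof (intro conjI allI impI)
    fix i assume "Suc i < length w"
    then show "E (w ! i) (w ! Suc i)" using edge[of i] by (simp add: nth_append)
  qed (fact assms(2))
  show "E (last w) z"
    using edge[of "length w - 1"] assms(2) by (simp add: nth_append last_conv_nth)
qed

lemma is_path_append:
  assumes "is_path E w1" "is_path E w2" "last w1 = hd w2"
  shows "is_path E (w1 @ tl w2)"
  using assms(2,3)
proof (induction w2 rule: rev_induct)
  case Nil then show ?case using is_path_nonempty by blast
next
  case (snoc z w2)
  show ?case
  proof (cases "w2 = []")
    case True then show ?thesis using assms(1) by simp
  next
    case False
    have "is_path E (w1 @ tl w2)" and edge: "E (last w2) z"
      using snoc.IH is_path_butlast[OF snoc.prems(1) False] snoc.prems(2) False by simp_all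
    moreover have "last (w1 @ tl w2) = last w2" using False snoc.prems(2)
      by (cases w2) auto
    ultimately have "is_path E ((w1 @ tl w2) @ [z])" using is_path_snoc by metis
    then show ?thesis using False by (cases w2) auto
  qed
qed

lemma is_path_rev:
  assumes sym: "\<forall>x y. E x y \<longrightarrow> E y x" and "is_path E w"
  shows "is_path E (rev w)"
  unfolding is_path_def
proof (intro conjI allI impI)
  show "rev w \<noteq> []" using assms(2) is_path_nonempty by simp
  fix i assume i: "Suc i < length (rev w)"
  define j where "j = length w - Suc (Suc i)"
  have "Suc j < length w" using i unfolding j_def by auto
  then have "E (w ! j) (w ! Suc j)" using assms(2) unfolding is_path_def by blast
  then have "E (w ! Suc j) (w ! j)" using sym by blast
  moreover have "rev w ! i = w ! Suc j" "rev w ! Suc i = w ! j"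
    using i unfolding j_def by (auto simp: rev_nth Suc_diff_Suc)
  ultimately show "E (rev w ! i) (rev w ! Suc i)" by simp
qed

lemma is_path_leaves_set:
  assumes "is_path E w" "hd w \<in> A" "last w \<notin> A"
  obtains i where "Suc i < length w" "w ! i \<in> A" "w ! Suc i \<notin> A"
proof -
  have ne: "w \<noteq> []" using assms(1) by (rule is_path_nonempty)
  define k where "k = (LEAST i. i < length w \<and> w ! i \<notin> A)"
  have "length w - 1 < length w \<and> w ! (length w - 1) \<notin> A"
    using ne assms(3) by (simp add: last_conv_nth)
  then have k: "k < length w \<and> w ! k \<notin> A" unfolding k_def by (rule LeastI)
  have "k \<noteq> 0" using k assms(2) ne by (cases k) (auto simp: hd_conv_nth)
  then have "k - 1 < k" by simp
  then have "\<not> (k - 1 < length w \<and> w ! (k - 1) \<notin> A)"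
    unfolding k_def by (rule not_less_Least)
  then have "w ! (k - 1) \<in> A" using k by auto
  then show ?thesis using that[of "k - 1"] k \<open>k \<noteq> 0\<close> by simp
qed

lemma path_height_ge: "z \<in> set w \<Longrightarrow> H z \<le> path_height H w"
  unfolding path_height_def by (intro Max_ge) auto

lemma path_height_le: "w \<noteq> [] \<Longrightarrow> (\<And>z. z \<in> set w \<Longrightarrow> H z \<le> c) \<Longrightarrow> path_height H w \<le> c"
  unfolding path_height_def by (subst Max_le_iff) auto

lemma path_height_in: "w \<noteq> [] \<Longrightarrow> path_height H w \<in> H ` set w"
  unfolding path_height_def by (intro Max_in) auto

locale landscape =
  fixes E :: "'a::finite \<Rightarrow> 'a \<Rightarrow> bool" and H :: "'a \<Rightarrow> real"
  assumes sym: "\<forall>x y. E x y \<longrightarrow> E y x"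
    and connected: "\<forall>x y. (x, y) \<in> {(a, b). E a b}\<^sup>*"
begin

lemma path_exists: obtains w where "is_path E w" "hd w = x" "last w = y"
proof -
  have "(x, y) \<in> {(a, b). E a b}\<^sup>*" using connected by blast
  then have "\<exists>w. is_path E w \<and> hd w = x \<and> last w = y"
  proof (induction rule: rtrancl_induct)
    case base
    show ?case by (intro exI[of _ "[x]"]) simp
  next
    case (step y z)
    then obtain w where w: "is_path E w" "hd w = x" "last w = y" by blast
    have "w \<noteq> []" using w(1) by (rule is_path_nonempty)
    moreover have "is_path E (w @ [z])" using step(2) w(1,3) is_path_snoc by fastforce
    ultimately show ?case using w(2) by (intro exI[of _ "w @ [z]"]) auto
  qed
  then show ?thesis using that by blast
qed

lemma finite_path_heights: "finite {path_height H w | w. P w}"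
proof (rule finite_subset)
  have "path_height H w \<in> range H \<union> {path_height H []}" for w
    using path_height_in[of w H] by (cases "w = []") auto
  then show "{path_height H w | w. P w} \<subseteq> range H \<union> {path_height H []}" by blast
qed simp

lemma Phi_le_path_height:
  assumes "is_path E w" "hd w = x" "last w = y"
  shows "Phi E H x y \<le> path_height H w"
  unfolding Phi_def using assms by (intro Min_le finite_path_heights) auto

lemma Phi_attained:
  obtains w where "is_path E w" "hd w = x" "last w = y" "Phi E H x y = path_height H w"
proof -
  obtain w0 where "is_path E w0" "hd w0 = x" "last w0 = y" by (rule path_exists)
  then have "Phi E H x y \<in> {path_height H w | w. is_path E w \<and> hd w = x \<and> last w = y}"
    unfolding Phi_def by (intro Min_in finite_path_heights) auto
  then show ?thesis using that by blast
qed

lemma Phi_ge_endpoints: "H x \<le> Phi E H x y" "H y \<le> Phi E H x y"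
proof -
  obtain w where w: "is_path E w" "hd w = x" "last w = y" "Phi E H x y = path_height H w"
    by (rule Phi_attained)
  have "w \<noteq> []" using w(1) by (rule is_path_nonempty)
  then have "x \<in> set w" "y \<in> set w" using w(2,3) by auto
  then show "H x \<le> Phi E H x y" "H y \<le> Phi E H x y"
    using w(4) path_height_ge[of _ w H] by simp_all
qed

lemma Phi_refl: "Phi E H x x = H x"
proof -
  have "Phi E H x x \<le> path_height H [x]" by (rule Phi_le_path_height) auto
  then show ?thesis using Phi_ge_endpoints(1)[of x x] by (simp add: path_height_def)
qed

lemma Phi_sym: "Phi E H x y = Phi E H y x"
proof -
  have le: "Phi E H a b \<le> Phi E H b a" for a b
  proof -
    obtain w where w: "is_path E w" "hd w = b" "last w = a" "Phi E H b a = path_height H w"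
      by (rule Phi_attained)
    have "is_path E (rev w)" "hd (rev w) = a" "last (rev w) = b"
      using is_path_rev[OF sym w(1)] w is_path_nonempty by (auto simp: hd_rev last_rev)
    then have "Phi E H a b \<le> path_height H (rev w)" by (rule Phi_le_path_height)
    then show ?thesis using w(4) by (simp add: path_height_def)
  qed
  show ?thesis using le[of x y] le[of y x] by simp
qed

lemma Phi_ultrametric: "Phi E H x z \<le> max (Phi E H x y) (Phi E H y z)"
proof -
  obtain w1 where w1: "is_path E w1" "hd w1 = x" "last w1 = y" "Phi E H x y = path_height H w1"
    by (rule Phi_attained)
  obtain w2 where w2: "is_path E w2" "hd w2 = y" "last w2 = z" "Phi E H y z = path_height H w2"
    by (rule Phi_attained)
  have ne: "w1 \<noteq> []" "w2 \<noteq> []" using w1(1) w2(1) is_path_nonempty by auto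
  have "is_path E (w1 @ tl w2)" using is_path_append[OF w1(1) w2(1)] w1(3) w2(2) by simp
  moreover have "hd (w1 @ tl w2) = x" using ne w1(2) by simp
  moreover have "last (w1 @ tl w2) = z" using ne w1(3) w2(2,3)
    by (cases w2; cases "tl w2") auto
  ultimately have "Phi E H x z \<le> path_height H (w1 @ tl w2)" by (rule Phi_le_path_height)
  also have "\<dots> \<le> max (path_height H w1) (path_height H w2)"
  proof (rule path_height_le)
    fix u assume "u \<in> set (w1 @ tl w2)"
    then have "u \<in> set w1 \<or> u \<in> set w2" by (cases w2) auto
    then show "H u \<le> max (path_height H w1) (path_height H w2)"
      using path_height_ge[of u w1 H] path_height_ge[of u w2 H] by auto
  qed (use ne in simp)
  finally show ?thesis using w1(4) w2(4) by simp
qed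

lemma Phi_edge: "E x y \<Longrightarrow> Phi E H x y \<le> max (H x) (H y)"
  using Phi_le_path_height[of "[x, y]" x y] by (simp add: is_path_def path_height_def)

lemma Phi_ge_boundary:
  assumes "x \<in> A" "y \<notin> A"
  obtains b where "b \<in> bd E A" "H b \<le> Phi E H x y"
proof -
  obtain w where w: "is_path E w" "hd w = x" "last w = y" "Phi E H x y = path_height H w"
    by (rule Phi_attained)
  obtain i where i: "Suc i < length w" "w ! i \<in> A" "w ! Suc i \<notin> A"
    using is_path_leaves_set[of E w A] w assms by auto
  have "E (w ! i) (w ! Suc i)" using w(1) i(1) unfolding is_path_def by blast
  then have "w ! Suc i \<in> bd E A" using i sym unfolding bd_def by blast
  moreover have "H (w ! Suc i) \<le> Phi E H x y"
    using w(4) path_height_ge[of "w ! Suc i" w H] i(1) by simp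
  ultimately show ?thesis using that by blast
qed

lemma Phi_in_range: "Phi E H x y \<in> range H"
proof -
  obtain w where w: "is_path E w" "Phi E H x y = path_height H w"
    by (rule Phi_attained)
  then show ?thesis using path_height_in[OF is_path_nonempty[OF w(1)]] by auto
qed

lemma finite_Phi_values: "finite {Phi E H x y | x y. P x y}"
  by (rule finite_subset[of _ "range H"]) (use Phi_in_range in auto)

lemma PhiS_le_Phi: "a \<in> A \<Longrightarrow> b \<in> B \<Longrightarrow> PhiS E H A B \<le> Phi E H a b"
  unfolding PhiS_def using finite_Phi_values by (intro Min_le) auto

lemma PhiS_attained:
  assumes "A \<noteq> {}" "B \<noteq> {}"
  obtains a b where "a \<in> A" "b \<in> B" "PhiS E H A B = Phi E H a b"
proof -
  have "PhiS E H A B \<in> {Phi E H x y | x y. x \<in> A \<and> y \<in> B}"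
    unfolding PhiS_def using finite_Phi_values assms by (intro Min_in) auto
  then show ?thesis using that by blast
qed

lemma PhiS_greatest:
  assumes "A \<noteq> {}" "B \<noteq> {}" "\<And>a b. a \<in> A \<Longrightarrow> b \<in> B \<Longrightarrow> c \<le> Phi E H a b"
  shows "c \<le> PhiS E H A B"
proof -
  obtain a b where "a \<in> A" "b \<in> B" "PhiS E H A B = Phi E H a b"
    using PhiS_attained[OF assms(1,2)] .
  then show ?thesis using assms(3) by simp
qed

end

section \<open>Bottoms, depths and valleys\<close>

lemma Fmin_subset: "Fmin H C \<subseteq> C"
  unfolding Fmin_def by auto

lemma Fmin_nonempty:
  fixes H :: "'a::finite \<Rightarrow> real"
  assumes "C \<noteq> {}" shows "Fmin H C \<noteq> {}"
proof -
  obtain x where "x \<in> C" "H x = Min (H ` C)" using Min_image_attained[of C H] assms by auto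
  then have "x \<in> Fmin H C" unfolding Fmin_def by simp
  then show ?thesis by auto
qed

lemma ground_in_Fmin: "z \<in> ground H \<Longrightarrow> z \<in> C \<Longrightarrow> z \<in> Fmin H C"
  unfolding ground_def Fmin_def by auto

lemma ground_if_le:
  assumes "H z \<le> H g" "g \<in> ground H"
  shows "z \<in> ground H"
  unfolding ground_def
proof (intro CollectI allI)
  fix y
  have "H g \<le> H y" using assms(2) unfolding ground_def by simp
  then show "H z \<le> H y" using assms(1) by linarith
qed

lemma Fmin_iff:
  fixes H :: "'a::finite \<Rightarrow> real"
  shows "x \<in> Fmin H C \<longleftrightarrow> x \<in> C \<and> H x = Min (H ` C)"
proof
  assume x: "x \<in> Fmin H C"
  then have xC: "x \<in> C" and "\<forall>y\<in>C. H x \<le> H y" unfolding Fmin_def by auto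
  then have "H x \<le> Min (H ` C)" by (subst Min_ge_iff) auto
  moreover have "Min (H ` C) \<le> H x" using xC by (simp add: Min_image_le)
  ultimately show "x \<in> C \<and> H x = Min (H ` C)" using xC by simp
next
  assume "x \<in> C \<and> H x = Min (H ` C)"
  then show "x \<in> Fmin H C" unfolding Fmin_def using Min_image_le[of C _ H] by auto
qed

lemma bdstar_iff:
  fixes H :: "'a::finite \<Rightarrow> real"
  shows "x \<in> bdstar E H C \<longleftrightarrow> x \<in> bd E C \<and> H x = Min (H ` bd E C)"
  unfolding bdstar_def by (rule Fmin_iff)

lemma depth_eq: "bd E C \<noteq> {} \<Longrightarrow> depth E H C = ereal (Min (H ` bd E C) - Min (H ` C))"
  unfolding depth_def by simp

lemma ground_le_Min:
  fixes H :: "'a::finite \<Rightarrow> real"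
  shows "g \<in> ground H \<Longrightarrow> C \<noteq> {} \<Longrightarrow> H g \<le> Min (H ` C)"
  unfolding ground_def by (subst Min_ge_iff) auto

context landscape
begin

lemma Hm_le: "x \<in> P \<Longrightarrow> Hm H P \<le> H x"
  unfolding Hm_def by (simp add: Min_image_le)

lemma Hm_attained:
  assumes "P \<noteq> {}"
  obtains p where "p \<in> P" "H p = Hm H P"
  using Min_image_attained[of P H] assms unfolding Hm_def by auto

lemma mem_Vset_if_le_Hm:
  assumes "x \<in> P" "H x \<le> Hm H P" "0 < Gam E H Ps P"
  shows "x \<in> Vset E H Ps P"
proof -
  have "PhiS E H P {x} \<le> H x" using PhiS_le_Phi[OF assms(1), of x "{x}"] by (simp add: Phi_refl)
  then show ?thesis using assms(2,3) unfolding Vset_def by simp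
qed

lemma Vset_nonempty: "P \<noteq> {} \<Longrightarrow> 0 < Gam E H Ps P \<Longrightarrow> Vset E H Ps P \<noteq> {}"
  by (metis Hm_attained mem_Vset_if_le_Hm empty_iff order_refl)

text \<open>Two valleys meeting at \<open>x\<close> would give a path from \<open>P\<close> to \<open>Q\<close> through \<open>x\<close> lower
  than both saddles \<open>\<Phi>(P, \<dots>)\<close> and \<open>\<Phi>(Q, \<dots>)\<close>.\<close>
lemma Vset_disjoint:
  assumes PQ: "P \<in> Ps" "Q \<in> Ps" "P \<noteq> Q" "P \<noteq> {}" "Q \<noteq> {}"
  shows "Vset E H Ps P \<inter> Vset E H Ps Q = {}"
proof (rule ccontr)
  assume "Vset E H Ps P \<inter> Vset E H Ps Q \<noteq> {}"
  then obtain x where x: "x \<in> Vset E H Ps P" "x \<in> Vset E H Ps Q" by blast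
  have QO: "Q \<subseteq> \<Union> (Ps - {P})" "P \<subseteq> \<Union> (Ps - {Q})" using PQ by auto
  have xP: "PhiS E H P {x} < PhiS E H P (\<Union> (Ps - {P}))"
    using x(1) unfolding Vset_def Gam_def by simp
  have xQ: "PhiS E H Q {x} < PhiS E H Q (\<Union> (Ps - {Q}))"
    using x(2) unfolding Vset_def Gam_def by simp
  obtain p where p: "p \<in> P" "PhiS E H P {x} = Phi E H p x"
    using PhiS_attained[OF PQ(4), of "{x}"] by auto
  obtain q where q: "q \<in> Q" "PhiS E H Q {x} = Phi E H q x"
    using PhiS_attained[OF PQ(5), of "{x}"] by auto
  have "PhiS E H P (\<Union> (Ps - {P})) \<le> Phi E H p q" using PhiS_le_Phi p(1) q(1) QO by blast
  moreover have "PhiS E H Q (\<Union> (Ps - {Q})) \<le> Phi E H p q"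
    using PhiS_le_Phi[of q Q p] p(1) q(1) QO Phi_sym by auto
  moreover have "Phi E H p q \<le> max (Phi E H p x) (Phi E H q x)"
    using Phi_ultrametric[of p q x] Phi_sym[of x q] by simp
  ultimately show False using xP xQ p q by linarith
qed

lemma disjoint_Vset_image:
  assumes "{} \<notin> Ps"
  shows "disjoint (Vset E H Ps ` Ps)"
proof (rule disjointI)
  fix C C' assume "C \<in> Vset E H Ps ` Ps" "C' \<in> Vset E H Ps ` Ps" "C \<noteq> C'"
  then obtain P Q where "P \<in> Ps" "Q \<in> Ps" "P \<noteq> Q" "C = Vset E H Ps P" "C' = Vset E H Ps Q"
    by blast
  then show "C \<inter> C' = {}" using Vset_disjoint assms by blast
qed

text \<open>A boundary point \<open>b\<close> next to a point \<open>y\<close> of the valley satisfies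
  \<open>\<Phi>(P, b) \<le> max \<Phi>(P, y) (H b)\<close>, where \<open>\<Phi>(P, b)\<close> is at least \<open>Hm P + \<Gamma>\<close> but \<open>\<Phi>(P, y)\<close> is below.\<close>
lemma Vset_boundary_ge:
  assumes "P \<noteq> {}" "b \<in> bd E (Vset E H Ps P)"
  shows "Hm H P + Gam E H Ps P \<le> H b"
proof -
  obtain y where y: "y \<in> Vset E H Ps P" "E b y" "b \<notin> Vset E H Ps P"
    using assms(2) unfolding bd_def by auto
  have b_out: "Gam E H Ps P \<le> PhiS E H P {b} - Hm H P" using y(3) unfolding Vset_def by simp
  have y_in: "PhiS E H P {y} - Hm H P < Gam E H Ps P" using y(1) unfolding Vset_def by simp
  obtain p where p: "p \<in> P" "PhiS E H P {y} = Phi E H p y"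
    using PhiS_attained[OF assms(1), of "{y}"] by auto
  have "PhiS E H P {b} \<le> Phi E H p b" using PhiS_le_Phi p(1) by blast
  also have "\<dots> \<le> max (Phi E H p y) (Phi E H y b)" by (rule Phi_ultrametric)
  also have "\<dots> \<le> max (Phi E H p y) (H b)"
  proof -
    have "E y b" using y(2) sym by blast
    then have "Phi E H y b \<le> max (H y) (H b)" by (rule Phi_edge)
    moreover have "H y \<le> Phi E H p y" by (rule Phi_ge_endpoints(2))
    ultimately show ?thesis by (auto simp: max_def split: if_splits)
  qed
  finally show ?thesis using b_out y_in p by linarith
qed

lemma depth_Vset_ge:
  assumes "P \<noteq> {}" "0 < Gam E H Ps P"
  shows "ereal (Gam E H Ps P) \<le> depth E H (Vset E H Ps P)"
proof (cases "bd E (Vset E H Ps P) = {}")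
  case True
  then show ?thesis unfolding depth_def by simp
next
  case False
  obtain b where b: "b \<in> bd E (Vset E H Ps P)" "H b = Min (H ` bd E (Vset E H Ps P))"
    using Min_image_attained[of "bd E (Vset E H Ps P)" H] False by auto
  obtain p where p: "p \<in> P" "H p = Hm H P" using Hm_attained[OF assms(1)] .
  have "p \<in> Vset E H Ps P" using mem_Vset_if_le_Hm[OF p(1) _ assms(2)] p(2) by simp
  then have "Min (H ` Vset E H Ps P) \<le> H p" by (simp add: Min_image_le)
  then have "Gam E H Ps P \<le> Min (H ` bd E (Vset E H Ps P)) - Min (H ` Vset E H Ps P)"
    using Vset_boundary_ge[OF assms(1) b(1)] b(2) p(2) by linarith
  then show ?thesis using False by (simp add: depth_eq)
qed

lemma Gstar_le_Gam: "P \<in> Ps \<Longrightarrow> finite Ps \<Longrightarrow> Gstar E H Ps \<le> Gam E H Ps P"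
  unfolding Gstar_def by (intro Min_le) auto

lemma Gstar_pos:
  assumes "finite Ps" "Ps \<noteq> {}" "\<And>P. P \<in> Ps \<Longrightarrow> 0 < Gam E H Ps P"
  shows "0 < Gstar E H Ps"
proof -
  have "Gstar E H Ps \<in> Gam E H Ps ` Ps" unfolding Gstar_def using assms(1,2) by (intro Min_in) auto
  then show ?thesis using assms(3) by auto
qed

lemma stable_plateauD:
  assumes "stable_plateau E H P"
  shows "P \<noteq> {}" "conn_set E P" "x \<in> P \<Longrightarrow> y \<in> P \<Longrightarrow> H x = H y"
    "x \<in> P \<Longrightarrow> y \<in> bd E P \<Longrightarrow> H x < H y"
  using assms unfolding stable_plateau_def by blast+

lemma stable_plateau_superset:
  assumes P: "stable_plateau E H P" and Q: "conn_set E Q" "\<forall>a\<in>Q. \<forall>b\<in>Q. H a = H b"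
    and x: "x \<in> P" "x \<in> Q"
  shows "Q \<subseteq> P"
proof
  fix y assume y: "y \<in> Q"
  show "y \<in> P"
  proof (rule ccontr)
    assume "y \<notin> P"
    obtain w where w: "is_path E w" "hd w = x" "last w = y" "set w \<subseteq> Q"
      using Q(1) x(2) y unfolding conn_set_def by blast
    obtain i where i: "Suc i < length w" "w ! i \<in> P" "w ! Suc i \<notin> P"
      by (rule is_path_leaves_set[OF w(1)]) (use w(2,3) x(1) \<open>y \<notin> P\<close> in simp_all)
    have "E (w ! i) (w ! Suc i)" using w(1) i(1) unfolding is_path_def by blast
    then have "w ! Suc i \<in> bd E P" using i sym unfolding bd_def by blast
    then have "H (w ! i) < H (w ! Suc i)" using stable_plateauD(4)[OF P i(2)] by simp
    moreover have "w ! i \<in> Q" "w ! Suc i \<in> Q" using w(4) i(1) nth_mem[of _ w] by auto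
    then have "H (w ! i) = H (w ! Suc i)" using Q(2) by blast
    ultimately show False by simp
  qed
qed

lemma stable_plateaux_eq:
  assumes "stable_plateau E H P" "stable_plateau E H Q" "x \<in> P" "x \<in> Q"
  shows "P = Q"
proof
  show "Q \<subseteq> P"
    using stable_plateau_superset[OF assms(1) _ _ assms(3,4)] stable_plateauD[OF assms(2)] by blast
  show "P \<subseteq> Q"
    using stable_plateau_superset[OF assms(2) _ _ assms(4,3)] stable_plateauD[OF assms(1)] by blast
qed

lemma Union_others_nonempty:
  assumes "2 \<le> card Ps" "P \<in> Ps" "{} \<notin> Ps"
  shows "\<Union> (Ps - {P}) \<noteq> {}"
proof -
  have "Ps \<noteq> {P}" using assms(1) by (intro notI) simp
  then obtain Q where Q: "Q \<in> Ps" "Q \<noteq> P" using assms(2) by blast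
  then have "Q \<noteq> {}" using assms(3) by auto
  then obtain x where "x \<in> Q" by blast
  then have "x \<in> \<Union> (Ps - {P})" using Q by blast
  then show ?thesis by blast
qed

lemma Gam_stable_plateau_pos:
  assumes P: "stable_plateau E H P" "P \<in> Ps" and dj: "disjoint Ps"
    and others: "\<Union> (Ps - {P}) \<noteq> {}"
  shows "0 < Gam E H Ps P"
proof -
  have "P \<noteq> {}" using P(1) by (rule stable_plateauD)
  obtain p q where pq: "p \<in> P" "q \<in> \<Union> (Ps - {P})" "PhiS E H P (\<Union> (Ps - {P})) = Phi E H p q"
    using PhiS_attained[OF \<open>P \<noteq> {}\<close> others] by blast
  obtain Q where Q: "Q \<in> Ps" "Q \<noteq> P" "q \<in> Q" using pq(2) by blast
  have "q \<notin> P" using disjointD[OF dj Q(1) P(2) Q(2)] Q(3) by blast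
  obtain b where b: "b \<in> bd E P" "H b \<le> Phi E H p q" using Phi_ge_boundary[OF pq(1) \<open>q \<notin> P\<close>] .
  have "H p < H b" using stable_plateauD(4)[OF P(1) pq(1) b(1)] .
  then show ?thesis unfolding Gam_def using Hm_le[OF pq(1)] pq(3) b(2) by linarith
qed

definition level_edges :: "real \<Rightarrow> ('a \<times> 'a) set" where
  "level_edges c = {(a, b). E a b \<and> H a = c \<and> H b = c}"

definition level_component :: "'a \<Rightarrow> 'a set" where
  "level_component x = {y. (x, y) \<in> (level_edges (H x))\<^sup>*}"

lemma level_edges_rtrancl_sym: "(x, y) \<in> (level_edges c)\<^sup>* \<Longrightarrow> (y, x) \<in> (level_edges c)\<^sup>*"
proof -
  assume "(x, y) \<in> (level_edges c)\<^sup>*"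
  moreover have "converse (level_edges c) = level_edges c" unfolding level_edges_def using sym by auto
  ultimately show ?thesis using rtrancl_converseI[of x y "level_edges c"] by simp
qed

lemma level_edges_rtrancl_H: "(x, y) \<in> (level_edges c)\<^sup>* \<Longrightarrow> H x = c \<Longrightarrow> H y = c"
  by (induction rule: rtrancl_induct) (auto simp: level_edges_def)

lemma level_edges_rtrancl_path:
  assumes "(x, y) \<in> (level_edges c)\<^sup>*"
  obtains w where "is_path E w" "hd w = x" "last w = y" "\<forall>z\<in>set w. (x, z) \<in> (level_edges c)\<^sup>*"
proof -
  from assms have "\<exists>w. is_path E w \<and> hd w = x \<and> last w = y \<and> (\<forall>z\<in>set w. (x, z) \<in> (level_edges c)\<^sup>*)"
  proof (induction rule: rtrancl_induct)
    case base
    show ?case by (intro exI[of _ "[x]"]) simp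
  next
    case (step y z)
    then obtain w where w: "is_path E w" "hd w = x" "last w = y"
      "\<forall>u\<in>set w. (x, u) \<in> (level_edges c)\<^sup>*" by blast
    have "w \<noteq> []" using w(1) by (rule is_path_nonempty)
    moreover have "is_path E (w @ [z])"
      using is_path_snoc[OF w(1)] w(3) step(2) unfolding level_edges_def by simp
    moreover have "\<forall>u\<in>set (w @ [z]). (x, u) \<in> (level_edges c)\<^sup>*" using w(4) step by auto
    ultimately show ?case using w(2) by (intro exI[of _ "w @ [z]"]) auto
  qed
  then show ?thesis using that by blast
qed

lemma level_component_H: "y \<in> level_component x \<Longrightarrow> H y = H x"
  unfolding level_component_def using level_edges_rtrancl_H[of x y "H x"] by simp

lemma conn_set_level_component: "conn_set E (level_component s)"
  unfolding conn_set_def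
proof (intro ballI)
  let ?R = "level_edges (H s)"
  fix x y assume "x \<in> level_component s" "y \<in> level_component s"
  then have sx: "(s, x) \<in> ?R\<^sup>*" and sy: "(s, y) \<in> ?R\<^sup>*" unfolding level_component_def by auto
  have "(x, y) \<in> ?R\<^sup>*" using rtrancl_trans[OF level_edges_rtrancl_sym[OF sx] sy] .
  then obtain w where w: "is_path E w" "hd w = x" "last w = y" "\<forall>z\<in>set w. (x, z) \<in> ?R\<^sup>*"
    by (rule level_edges_rtrancl_path)
  have "set w \<subseteq> level_component s"
  proof
    fix z assume "z \<in> set w"
    then have "(s, z) \<in> ?R\<^sup>*" using rtrancl_trans[OF sx] w(4) by blast
    then show "z \<in> level_component s" unfolding level_component_def by simp
  qed
  then show "\<exists>w. is_path E w \<and> hd w = x \<and> last w = y \<and> set w \<subseteq> level_component s"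
    using w(1-3) by blast
qed

text \<open>A boundary point of the level component of a ground state at the ground energy would
  belong to the component; so the whole boundary is strictly higher.\<close>
lemma stable_plateau_level_component:
  assumes s: "s \<in> ground H"
  shows "stable_plateau E H (level_component s)"
  unfolding stable_plateau_def
proof (intro conjI ballI)
  show "level_component s \<noteq> {}" unfolding level_component_def by blast
  show "conn_set E (level_component s)" by (rule conn_set_level_component)
  fix x assume x: "x \<in> level_component s"
  show "H x = H y" if "y \<in> level_component s" for y
    using level_component_H[OF x] level_component_H[OF that] by simp
  fix y assume y: "y \<in> bd E (level_component s)"
  obtain x' where x': "x' \<in> level_component s" "E y x'" "y \<notin> level_component s"
    using y unfolding bd_def by blast
  have "H y \<noteq> H s"
  proof
    assume "H y = H s"
    then have "(x', y) \<in> level_edges (H s)"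
      using x' level_component_H sym unfolding level_edges_def by auto
    have "(s, x') \<in> (level_edges (H s))\<^sup>*" using x'(1) unfolding level_component_def by simp
    then have "(s, y) \<in> (level_edges (H s))\<^sup>*"
      using \<open>(x', y) \<in> level_edges (H s)\<close> by (rule rtrancl_into_rtrancl)
    then show False using x'(3) unfolding level_component_def by simp
  qed
  moreover have "H s \<le> H y" using s unfolding ground_def by simp
  ultimately show "H x < H y" using level_component_H[OF x] by linarith
qed

lemma level_component_subset_Omegabar:
  assumes s: "s \<in> ground H"
  shows "level_component s \<subseteq> Omegabar E H"
proof
  fix x assume x: "x \<in> level_component s"
  have "Phi E H s s \<le> Phibar E H"
    unfolding Phibar_def using s by (intro Max_ge finite_Phi_values) auto
  then have Phibar: "H s \<le> Phibar E H" by (simp add: Phi_refl)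
  have "(s, x) \<in> (level_edges (H s))\<^sup>*" using x unfolding level_component_def by simp
  then obtain w where w: "is_path E w" "hd w = s" "last w = x"
      "\<forall>z\<in>set w. (s, z) \<in> (level_edges (H s))\<^sup>*"
    by (rule level_edges_rtrancl_path)
  have "path_height H w \<le> H s"
  proof (rule path_height_le)
    show "w \<noteq> []" using w(1) by (rule is_path_nonempty)
    fix z assume "z \<in> set w"
    then show "H z \<le> H s" using w(4) level_edges_rtrancl_H[of s z "H s"] by simp
  qed
  then have "Phi E H s x \<le> H s" using Phi_le_path_height[OF w(1-3)] by linarith
  moreover have "PhiS E H (ground H) {x} \<le> Phi E H s x" using PhiS_le_Phi[OF s] by simp
  ultimately show "x \<in> Omegabar E H" unfolding Omegabar_def using Phibar by simp
qed

lemma ground_in_plateaux1: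
  assumes "s \<in> ground H"
  obtains P where "P \<in> plateaux1 E H" "s \<in> P"
proof
  show "level_component s \<in> plateaux1 E H" unfolding plateaux1_def
    using stable_plateau_level_component level_component_subset_Omegabar assms by blast
  show "s \<in> level_component s" unfolding level_component_def by blast
qed

lemma valleys_with_old_cycles:
  assumes "{} \<notin> Ps" "\<And>P. P \<in> Ps \<Longrightarrow> 0 < Gam E H Ps P" "{} \<notin> Old" "disjoint Old"
  defines "Vs \<equiv> Vset E H Ps ` Ps" and "Rest \<equiv> {C \<in> Old. \<forall>P\<in>Ps. C \<inter> Vset E H Ps P = {}}"
  shows "{} \<notin> Vs \<union> Rest" "disjoint (Vs \<union> Rest)"
proof -
  have "Vset E H Ps P \<noteq> {}" if "P \<in> Ps" for P
  proof (rule Vset_nonempty)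
    show "P \<noteq> {}" using assms(1) that by auto
    show "0 < Gam E H Ps P" using assms(2) that .
  qed
  then show "{} \<notin> Vs \<union> Rest" unfolding Vs_def Rest_def using assms(3) by auto
  have dVs: "disjoint Vs" unfolding Vs_def using assms(1) by (rule disjoint_Vset_image)
  have dRest: "disjoint Rest" using assms(4) unfolding Rest_def by (rule pairwise_subset) auto
  have cross: "C \<inter> C' = {}" if C: "C \<in> Vs" "C' \<in> Rest" for C C'
  proof -
    obtain P where "P \<in> Ps" "C = Vset E H Ps P" using C(1) unfolding Vs_def by blast
    then show ?thesis using C(2) unfolding Rest_def by auto
  qed
  show "disjoint (Vs \<union> Rest)"
  proof (rule disjointI)
    fix C C' assume C: "C \<in> Vs \<union> Rest" "C' \<in> Vs \<union> Rest" "C \<noteq> C'"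
    consider "C \<in> Vs" "C' \<in> Vs" | "C \<in> Vs" "C' \<in> Rest" | "C \<in> Rest" "C' \<in> Vs"
      | "C \<in> Rest" "C' \<in> Rest"
      using C(1,2) by blast
    then show "C \<inter> C' = {}"
    proof cases
      case 1
      then show ?thesis using disjointD[OF dVs _ _ C(3)] by blast
    next
      case 2
      then show ?thesis by (rule cross)
    next
      case 3
      then show ?thesis using cross[of C' C] by blast
    next
      case 4
      then show ?thesis using disjointD[OF dRest _ _ C(3)] by blast
    qed
  qed
qed

end

section \<open>The collapsed chain and its trace\<close>

locale collapsed_chain = landscape E H for E :: "'a::finite \<Rightarrow> 'a \<Rightarrow> bool" and H +
  fixes Cc :: "'a set set" and G :: real
  assumes cycles_nonempty: "{} \<notin> Cc"
    and cycles_disjoint: "disjoint Cc"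
begin

abbreviation "\<Delta> \<equiv> Delta E H Cc"
abbreviation "Pst \<equiv> Pstar E H Cc G"
abbreviation "rate \<equiv> crate E H Cc G"
abbreviation "hit \<equiv> hitn E H Cc G"

lemma Fmin_inj_on: "inj_on (Fmin H) Cc"
proof (rule inj_onI, rule ccontr)
  fix C C' assume C: "C \<in> Cc" "C' \<in> Cc" "Fmin H C = Fmin H C'" "C \<noteq> C'"
  have "Fmin H C \<subseteq> C \<inter> C'" using Fmin_subset[of H C] Fmin_subset[of H C'] C(3) by simp
  moreover have "C \<inter> C' = {}" using disjointD[OF cycles_disjoint C(1,2,4)] .
  moreover have "C \<noteq> {}" using cycles_nonempty C(1) by auto
  then have "Fmin H C \<noteq> {}" by (rule Fmin_nonempty)
  ultimately show False by simp
qed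

lemma some_cycle_eq:
  assumes "C \<in> Cc"
  shows "(SOME C'. C' \<in> Cc \<and> Fmin H C = Fmin H C') = C"
proof (rule some_equality)
  fix C' assume "C' \<in> Cc \<and> Fmin H C = Fmin H C'"
  then show "C' = C" using inj_onD[OF Fmin_inj_on, of C C'] assms by simp
qed (use assms in simp)

lemma singleton_ne_Fmin: "\<eta> \<in> \<Delta> \<Longrightarrow> C \<in> Cc \<Longrightarrow> {\<eta>} \<noteq> Fmin H C"
  using Fmin_subset[of H C] unfolding Delta_def by blast

lemma Cstar_in_cycles: "C \<in> Cstar E H Cc G \<Longrightarrow> C \<in> Cc"
  unfolding Cstar_def by simp

lemma singleton_notin_Pstar: "\<eta> \<in> \<Delta> \<Longrightarrow> {\<eta>} \<notin> Pst"
  using singleton_ne_Fmin Cstar_in_cycles unfolding Pstar_def by blast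

lemma Fmin_in_Pstar: "C \<in> Cstar E H Cc G \<Longrightarrow> Fmin H C \<in> Pst"
  unfolding Pstar_def by simp

lemma cstates_cases:
  assumes "y \<in> cstates E H Cc"
  obtains (point) \<xi> where "\<xi> \<in> \<Delta>" "y = {\<xi>}" | (bottom) C where "C \<in> Cc" "y = Fmin H C"
  using assms unfolding cstates_def by auto

lemma singleton_in_cstates: "\<eta> \<in> \<Delta> \<Longrightarrow> {\<eta>} \<in> cstates E H Cc"
  unfolding cstates_def by auto

lemma Fmin_in_cstates: "C \<in> Cc \<Longrightarrow> Fmin H C \<in> cstates E H Cc"
  unfolding cstates_def by auto

lemma rate_nonneg: "0 \<le> rate x y"
  unfolding crate_def by (simp add: Let_def)

lemma rate_point_point:
  "\<eta> \<in> \<Delta> \<Longrightarrow> \<xi> \<in> \<Delta> \<Longrightarrow> rate {\<eta>} {\<xi>} = (if \<eta> \<noteq> \<xi> \<and> E \<eta> \<xi> \<and> H \<xi> \<le> H \<eta> then 1 else 0)"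
  unfolding crate_def by (simp add: Let_def)

lemma rate_point_bottom:
  assumes "\<eta> \<in> \<Delta>" "C \<in> Cc"
  shows "rate {\<eta>} (Fmin H C) = (if \<eta> \<in> bd E C then real (card {\<zeta> \<in> C. E \<eta> \<zeta>}) else 0)"
proof -
  have "Fmin H C \<notin> (\<lambda>z. {z}) ` \<Delta>" using singleton_ne_Fmin assms by blast
  then show ?thesis unfolding crate_def using assms some_cycle_eq by (simp add: Let_def)
qed

lemma rate_bottom_point:
  assumes "\<eta> \<in> \<Delta>" "C \<in> Cc"
  shows "rate (Fmin H C) {\<eta>} = (if depth E H C \<le> ereal G \<and> \<eta> \<in> bdstar E H C
    then real (card {\<zeta> \<in> C. E \<eta> \<zeta>}) / real (card (Fmin H C)) else 0)"
proof -
  have "Fmin H C \<notin> (\<lambda>z. {z}) ` \<Delta>" using singleton_ne_Fmin assms by blast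
  then show ?thesis unfolding crate_def using assms some_cycle_eq by (simp add: Let_def)
qed

lemma rate_bottom_bottom:
  assumes "C \<in> Cc" "C' \<in> Cc"
  shows "rate (Fmin H C) (Fmin H C') = 0"
proof -
  have "Fmin H C \<notin> (\<lambda>z. {z}) ` \<Delta>" "Fmin H C' \<notin> (\<lambda>z. {z}) ` \<Delta>"
    using singleton_ne_Fmin assms by blast+
  then show ?thesis unfolding crate_def by simp
qed

lemma card_neighbours_pos: "\<eta> \<in> bd E C \<Longrightarrow> 0 < card {\<zeta> \<in> C. E \<eta> \<zeta>}"
  unfolding bd_def by (auto simp: card_gt_0_iff)

lemma rate_point_point_pos_iff:
  "\<eta> \<in> \<Delta> \<Longrightarrow> \<xi> \<in> \<Delta> \<Longrightarrow> 0 < rate {\<eta>} {\<xi>} \<longleftrightarrow> \<eta> \<noteq> \<xi> \<and> E \<eta> \<xi> \<and> H \<xi> \<le> H \<eta>"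
  by (simp add: rate_point_point)

lemma rate_point_bottom_pos_iff:
  assumes "\<eta> \<in> \<Delta>" "C \<in> Cc"
  shows "0 < rate {\<eta>} (Fmin H C) \<longleftrightarrow> \<eta> \<in> bd E C"
  using rate_point_bottom[OF assms] card_neighbours_pos[of \<eta> C] by simp

lemma rate_bottom_point_pos_iff:
  assumes "\<eta> \<in> \<Delta>" "C \<in> Cc"
  shows "0 < rate (Fmin H C) {\<eta>} \<longleftrightarrow> depth E H C \<le> ereal G \<and> \<eta> \<in> bdstar E H C"
proof -
  have "0 < card (Fmin H C)"
    using Fmin_nonempty[of C H] cycles_nonempty assms(2) by (auto simp: card_gt_0_iff)
  moreover have "\<eta> \<in> bdstar E H C \<Longrightarrow> 0 < card {\<zeta> \<in> C. E \<eta> \<zeta>}"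
    using card_neighbours_pos by (simp add: bdstar_iff)
  ultimately show ?thesis using rate_bottom_point[OF assms] by simp
qed

lemma rate_bottom_point_posD:
  assumes "\<eta> \<in> \<Delta>" "C \<in> Cc" "0 < rate (Fmin H C) {\<eta>}"
  shows "\<eta> \<in> bd E C" "H \<eta> = Min (H ` bd E C)" "Min (H ` bd E C) \<le> Min (H ` C) + G"
proof -
  have d: "depth E H C \<le> ereal G" and s: "\<eta> \<in> bdstar E H C"
    using assms rate_bottom_point_pos_iff by auto
  then show "\<eta> \<in> bd E C" "H \<eta> = Min (H ` bd E C)" by (auto simp: bdstar_iff)
  then have "bd E C \<noteq> {}" by blast
  then show "Min (H ` bd E C) \<le> Min (H ` C) + G" using d depth_eq[of E C H] by simp
qed

lemma Cstar_gap:
  assumes "C \<in> Cstar E H Cc G" "b \<in> bd E C"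
  shows "Min (H ` C) + G \<le> H b"
proof -
  have "ereal G \<le> depth E H C" using assms(1) unfolding Cstar_def by simp
  moreover have "bd E C \<noteq> {}" using assms(2) by blast
  ultimately have "G \<le> Min (H ` bd E C) - Min (H ` C)" using depth_eq[of E C H] by simp
  then have "Min (H ` C) + G \<le> Min (H ` bd E C)" by linarith
  also have "\<dots> \<le> H b" using assms(2) by (simp add: Min_image_le)
  finally show ?thesis .
qed

lemma hit_bounds: "0 \<le> hit B t n x \<and> hit B t n x \<le> 1"
proof (induction n arbitrary: x)
  case 0 then show ?case by simp
next
  case (Suc n)
  define q where "q = (\<Sum>y\<in>cstates E H Cc. rate x y)"
  have "0 \<le> q" unfolding q_def by (intro sum_nonneg) (simp add: rate_nonneg)
  show ?case
  proof (cases "x = t \<or> x \<in> B \<or> q = 0")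
    case True then show ?thesis by (auto simp: q_def Let_def)
  next
    case False
    then have q: "0 < q" using \<open>0 \<le> q\<close> by auto
    have eq: "hit B t (Suc n) x = (\<Sum>y\<in>cstates E H Cc. rate x y / q * hit B t n y)"
      using False by (simp add: q_def Let_def)
    have "(\<Sum>y\<in>cstates E H Cc. rate x y / q * hit B t n y) \<le> (\<Sum>y\<in>cstates E H Cc. rate x y / q)"
      using Suc.IH q rate_nonneg by (intro sum_mono mult_right_le_one_le) auto
    also have "\<dots> = 1" using q unfolding q_def by (simp add: sum_divide_distrib[symmetric])
    finally show ?thesis unfolding eq using Suc.IH q rate_nonneg
      by (auto intro!: sum_nonneg)
  qed
qed

lemma hit_target [simp]: "hit B t n t = 1"
  by (cases n) auto

lemma hit_blocked: "x \<in> B \<Longrightarrow> x \<noteq> t \<Longrightarrow> hit B t n x = 0"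
  by (cases n) auto

lemma hit_Suc_posE:
  assumes "x \<noteq> t" "x \<notin> B" "0 < hit B t (Suc n) x"
  obtains y where "y \<in> cstates E H Cc" "0 < rate x y" "0 < hit B t n y"
proof -
  have "\<exists>y\<in>cstates E H Cc. 0 < rate x y \<and> 0 < hit B t n y"
  proof (rule ccontr)
    assume none: "\<not> ?thesis"
    have "rate x y = 0 \<or> hit B t n y = 0" if "y \<in> cstates E H Cc" for y
      using that none rate_nonneg[of x y] hit_bounds[of B t n y] by force
    then have "hit B t (Suc n) x = 0" using assms(1,2) by (auto simp: Let_def intro!: sum.neutral)
    then show False using assms(3) by simp
  qed
  then show ?thesis using that by blast
qed

lemma hit_Suc_pos:
  assumes "x \<noteq> t" "x \<notin> B" "y \<in> cstates E H Cc" "0 < rate x y" "0 < hit B t n y"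
  shows "0 < hit B t (Suc n) x"
proof -
  define q where "q = (\<Sum>y\<in>cstates E H Cc. rate x y)"
  have "rate x y \<le> q" unfolding q_def using assms(3) rate_nonneg by (intro member_le_sum) auto
  then have q: "0 < q" using assms(4) by simp
  then have eq: "hit B t (Suc n) x = (\<Sum>y\<in>cstates E H Cc. rate x y / q * hit B t n y)"
    using assms(1,2) by (simp add: q_def Let_def)
  have "0 < rate x y / q * hit B t n y" using assms(4,5) q by simp
  also have "\<dots> \<le> (\<Sum>y\<in>cstates E H Cc. rate x y / q * hit B t n y)"
    using assms(3) q rate_nonneg hit_bounds by (intro member_le_sum) auto
  finally show ?thesis using eq by simp
qed

definition hits :: "'a set set \<Rightarrow> 'a set \<Rightarrow> 'a set \<Rightarrow> bool" where
  "hits B t x \<longleftrightarrow> (\<exists>n. 0 < hit B t n x)"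

lemma hits_target: "hits B t t"
  unfolding hits_def by (auto intro: exI[of _ 0])

lemma hits_backward:
  assumes "t \<in> B" "x \<notin> B" "y \<in> cstates E H Cc" "0 < rate x y" "hits B t y"
  shows "hits B t x"
proof -
  have "x \<noteq> t" using assms(1,2) by blast
  then show ?thesis using assms(2-5) hit_Suc_pos unfolding hits_def by blast
qed

lemma hit_le_hitprob: "hit B t n x \<le> hitprob E H Cc G B t x"
  unfolding hitprob_def by (rule cSUP_upper) (auto intro: bdd_aboveI[where M=1] simp: hit_bounds)

lemma hitprob_nonneg: "0 \<le> hitprob E H Cc G B t x"
  using hit_le_hitprob[of B t 0 x] hit_bounds[of B t 0 x] by linarith

lemma hitprob_pos_iff: "0 < hitprob E H Cc G B t x \<longleftrightarrow> hits B t x"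
proof
  assume "0 < hitprob E H Cc G B t x"
  show "hits B t x"
  proof (rule ccontr)
    assume "\<not> hits B t x"
    then have "hitprob E H Cc G B t x \<le> 0"
      unfolding hits_def hitprob_def by (intro cSUP_least) (auto simp: not_less)
    then show False using \<open>0 < hitprob E H Cc G B t x\<close> by simp
  qed
next
  assume "hits B t x"
  then show "0 < hitprob E H Cc G B t x" unfolding hits_def
    using hit_le_hitprob less_le_trans by blast
qed

lemma hit_from_point:
  assumes "\<eta> \<in> \<Delta>" "t \<noteq> {\<eta>}" "{\<eta>} \<notin> B" "0 < hit B t n {\<eta>}"
  obtains (descend) k \<xi> where "n = Suc k" "\<xi> \<in> \<Delta>" "\<eta> \<noteq> \<xi>" "E \<eta> \<xi>" "H \<xi> \<le> H \<eta>"
      "0 < hit B t k {\<xi>}"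
    | (enter) k C where "n = Suc k" "C \<in> Cc" "\<eta> \<in> bd E C" "0 < hit B t k (Fmin H C)"
proof -
  obtain k where n: "n = Suc k" using assms(2,4) by (cases n) auto
  obtain y where y: "y \<in> cstates E H Cc" "0 < rate {\<eta>} y" "0 < hit B t k y"
    by (rule hit_Suc_posE[of "{\<eta>}" t B k]) (use assms n in auto)
  from y(1) show ?thesis
  proof (cases rule: cstates_cases)
    case (point \<xi>)
    then show ?thesis using descend[OF n] y rate_point_point_pos_iff[OF assms(1)] by auto
  next
    case (bottom C)
    then show ?thesis using enter[OF n] y rate_point_bottom_pos_iff[OF assms(1)] by auto
  qed
qed

lemma hit_from_bottom:
  assumes "C \<in> Cc" "t \<noteq> Fmin H C" "0 < hit B t n (Fmin H C)"
  obtains k \<zeta> where "n = Suc k" "\<zeta> \<in> \<Delta>" "0 < rate (Fmin H C) {\<zeta>}" "0 < hit B t k {\<zeta>}"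
proof -
  have "Fmin H C \<notin> B" using assms(2,3) hit_blocked by fastforce
  obtain k where n: "n = Suc k" using assms(2,3) by (cases n) auto
  obtain y where y: "y \<in> cstates E H Cc" "0 < rate (Fmin H C) y" "0 < hit B t k y"
    by (rule hit_Suc_posE[of "Fmin H C" t B k]) (use \<open>Fmin H C \<notin> B\<close> assms n in auto)
  from y(1) show ?thesis
  proof (cases rule: cstates_cases)
    case (point \<zeta>)
    then show ?thesis using that[OF n] y by auto
  next
    case (bottom C')
    then show ?thesis using y(2) rate_bottom_bottom[OF assms(1)] by simp
  qed
qed

lemma Cstar_boundary_ge:
  assumes "C \<in> Cstar E H Cc G" "g \<in> ground H" "b \<in> bd E C"
  shows "H g + G \<le> H b"
proof -
  have "C \<noteq> {}" using assms(1) cycles_nonempty Cstar_in_cycles by auto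
  then have "H g \<le> Min (H ` C)" by (rule ground_le_Min[OF assms(2)])
  then show ?thesis using Cstar_gap[OF assms(1,3)] by linarith
qed

lemma rate_Cstar_exit_pos:
  assumes C: "C \<in> Cstar E H Cc G" and g: "g \<in> ground H"
    and \<eta>: "\<eta> \<in> \<Delta>" "\<eta> \<in> bd E C" "H \<eta> \<le> H g + G"
  shows "0 < rate (Fmin H C) {\<eta>}"
proof -
  have "C \<noteq> {}" using C cycles_nonempty Cstar_in_cycles by auto
  have ne: "bd E C \<noteq> {}" using \<eta>(2) by blast
  obtain b where b: "b \<in> bd E C" "H b = Min (H ` bd E C)" using Min_image_attained[of "bd E C" H] ne by auto
  have "Min (H ` C) + G \<le> H b" using Cstar_gap[OF C b(1)] .
  moreover have "H b \<le> H \<eta>" using b \<eta>(2) by (simp add: Min_image_le)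
  moreover have "H g \<le> Min (H ` C)" using ground_le_Min[OF g \<open>C \<noteq> {}\<close>] .
  ultimately have "H \<eta> = Min (H ` bd E C)" "Min (H ` bd E C) - Min (H ` C) = G"
    using \<eta>(3) b(2) by linarith+
  then have "\<eta> \<in> bdstar E H C" "depth E H C \<le> ereal G"
    using \<eta>(2) ne by (simp_all add: bdstar_iff depth_eq)
  then show ?thesis using rate_bottom_point_pos_iff \<eta>(1) C Cstar_in_cycles by simp
qed

text \<open>From a point of \<open>\<Delta>\<close> the chain only moves down, or passes through a cycle and leaves it
  at most as high as it entered; and it enters a cycle of depth at least \<open>G\<close> only from at least
  \<open>G\<close> above its bottom.\<close>
lemma hit_Cstar_level_ge:
  assumes CY: "CY \<in> Cstar E H Cc G" and g: "g \<in> ground H"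
  shows "\<eta> \<in> \<Delta> \<Longrightarrow> 0 < hit Pst (Fmin H CY) n {\<eta>} \<Longrightarrow> H g + G \<le> H \<eta>"
proof (induction n arbitrary: \<eta> rule: less_induct)
  case (less n \<eta>)
  have CYc: "CY \<in> Cc" using CY by (rule Cstar_in_cycles)
  have "Fmin H CY \<noteq> {\<eta>}" using singleton_ne_Fmin[OF less.prems(1) CYc] by auto
  from hit_from_point[OF less.prems(1) this singleton_notin_Pstar[OF less.prems(1)] less.prems(2),
    case_names descend enter]
  show ?case
  proof cases
    case (descend k \<xi>)
    then have "H g + G \<le> H \<xi>" using less.IH[of k \<xi>] by simp
    then show ?thesis using descend by linarith
  next
    case (enter k C)
    show ?thesis
    proof (cases "Fmin H C = Fmin H CY")
      case True
      then have "C = CY" using inj_onD[OF Fmin_inj_on] enter(2) CYc by blast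
      then show ?thesis using Cstar_boundary_ge[OF CY g] enter(3) by simp
    next
      case False
      obtain j \<zeta> where \<zeta>: "k = Suc j" "\<zeta> \<in> \<Delta>" "0 < rate (Fmin H C) {\<zeta>}"
          "0 < hit Pst (Fmin H CY) j {\<zeta>}"
        by (rule hit_from_bottom[OF enter(2) _ enter(4)]) (use False in auto)
      have "H \<zeta> \<le> H \<eta>"
        using rate_bottom_point_posD[OF \<zeta>(2) enter(2) \<zeta>(3)] enter(3) by (simp add: Min_image_le)
      moreover have "H g + G \<le> H \<zeta>" using less.IH[of j \<zeta>] \<zeta> enter(1) by simp
      ultimately show ?thesis by linarith
    qed
  qed
qed

lemma hits_back_along_edge:
  assumes "\<eta> \<in> \<Delta>" "\<xi> \<in> \<Delta>" "\<eta> \<noteq> \<xi>" "E \<eta> \<xi>" "H \<xi> = H \<eta>" "X \<in> Pst" "hits Pst X {\<eta>}"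
  shows "hits Pst X {\<xi>}"
proof -
  have "0 < rate {\<xi>} {\<eta>}" using rate_point_point_pos_iff[OF assms(2,1)] assms(3-5) sym by auto
  then show ?thesis
    using hits_backward[OF assms(6) singleton_notin_Pstar[OF assms(2)] singleton_in_cstates[OF assms(1)]
        _ assms(7)] by simp
qed

lemma hits_back_through_cycle:
  assumes C: "C \<in> Cc" "Fmin H C \<notin> Pst" and \<eta>: "\<eta> \<in> \<Delta>" "\<eta> \<in> bd E C"
    and \<zeta>: "\<zeta> \<in> \<Delta>" "0 < rate (Fmin H C) {\<zeta>}" "H \<eta> \<le> H \<zeta>"
    and X: "X \<in> Pst" "hits Pst X {\<eta>}"
  shows "hits Pst X {\<zeta>}"
proof -
  note exit = rate_bottom_point_posD[OF \<zeta>(1) C(1) \<zeta>(2)]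
  have "Min (H ` bd E C) \<le> H \<eta>" using \<eta>(2) by (simp add: Min_image_le)
  then have "H \<eta> = Min (H ` bd E C)" using exit(2) \<zeta>(3) by linarith
  then have "0 < rate (Fmin H C) {\<eta>}"
    using \<zeta>(2) \<eta> rate_bottom_point_pos_iff[OF \<zeta>(1) C(1)] rate_bottom_point_pos_iff[OF \<eta>(1) C(1)]
    by (simp add: bdstar_iff)
  then have "hits Pst X (Fmin H C)"
    using hits_backward[OF X(1) C(2) singleton_in_cstates[OF \<eta>(1)] _ X(2)] by simp
  moreover have "0 < rate {\<zeta>} (Fmin H C)" using rate_point_bottom_pos_iff[OF \<zeta>(1) C(1)] exit(1) by simp
  ultimately show ?thesis
    using hits_backward[OF X(1) singleton_notin_Pstar[OF \<zeta>(1)] Fmin_in_cstates[OF C(1)]] by simp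
qed

text \<open>Hence a path of the chain from a point at level \<open>H g + G\<close> into such a bottom runs at
  that constant level, and every step of it can be reversed.\<close>
lemma hit_Cstar_reversible:
  assumes CY: "CY \<in> Cstar E H Cc G" and g: "g \<in> ground H" and X: "X \<in> Pst"
  shows "\<eta> \<in> \<Delta> \<Longrightarrow> H \<eta> \<le> H g + G \<Longrightarrow> 0 < hit Pst (Fmin H CY) n {\<eta>} \<Longrightarrow> hits Pst X {\<eta>}
    \<Longrightarrow> \<exists>\<eta>'\<in>\<Delta>. H \<eta>' \<le> H g + G \<and> 0 < rate (Fmin H CY) {\<eta>'} \<and> hits Pst X {\<eta>'}"
proof (induction n arbitrary: \<eta> rule: less_induct)
  case (less n \<eta>)
  have CYc: "CY \<in> Cc" using CY by (rule Cstar_in_cycles)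
  have level: "H \<eta> = H g + G"
    using hit_Cstar_level_ge[OF CY g less.prems(1,3)] less.prems(2) by linarith
  have "Fmin H CY \<noteq> {\<eta>}" using singleton_ne_Fmin[OF less.prems(1) CYc] by auto
  from hit_from_point[OF less.prems(1) this singleton_notin_Pstar[OF less.prems(1)] less.prems(3),
    case_names descend enter]
  show ?case
  proof cases
    case (descend k \<xi>)
    have "H \<xi> = H \<eta>" using hit_Cstar_level_ge[OF CY g descend(2,6)] descend(5) level by linarith
    then have "hits Pst X {\<xi>}"
      using hits_back_along_edge[OF less.prems(1) descend(2-4) _ X less.prems(4)] by simp
    then show ?thesis using less.IH[of k \<xi>] descend level by simp
  next
    case (enter k C)
    show ?thesis
    proof (cases "Fmin H C = Fmin H CY")
      case True
      then have "C = CY" using inj_onD[OF Fmin_inj_on] enter(2) CYc by blast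
      then have "0 < rate (Fmin H CY) {\<eta>}"
        using rate_Cstar_exit_pos[OF CY g less.prems(1)] enter(3) less.prems(2) by simp
      then show ?thesis using less.prems by blast
    next
      case False
      obtain j \<zeta> where \<zeta>: "k = Suc j" "\<zeta> \<in> \<Delta>" "0 < rate (Fmin H C) {\<zeta>}"
          "0 < hit Pst (Fmin H CY) j {\<zeta>}"
        by (rule hit_from_bottom[OF enter(2) _ enter(4)]) (use False in auto)
      have "H \<zeta> \<le> H \<eta>"
        using rate_bottom_point_posD[OF \<zeta>(2) enter(2) \<zeta>(3)] enter(3) by (simp add: Min_image_le)
      moreover have "H g + G \<le> H \<zeta>" using hit_Cstar_level_ge[OF CY g \<zeta>(2,4)] .
      moreover have "Fmin H C \<notin> Pst" using hit_blocked False enter(4) by fastforce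
      ultimately have "hits Pst X {\<zeta>}"
        using hits_back_through_cycle[OF enter(2) _ less.prems(1) enter(3) \<zeta>(2,3) _ X less.prems(4)]
          level by simp
      then show ?thesis using less.IH[of j \<zeta>] \<zeta> enter(1) \<open>H \<zeta> \<le> H \<eta>\<close> less.prems(2) by simp
    qed
  qed
qed

lemma trate_pos_iff:
  "0 < trate E H Cc G P P' \<longleftrightarrow> (\<exists>\<eta>\<in>\<Delta>. 0 < rate P {\<eta>} \<and> hits Pst P' {\<eta>})"
proof -
  define f where "f \<eta> = rate P {\<eta>} * hitprob E H Cc G Pst P' {\<eta>}" for \<eta>
  have f_nonneg: "0 \<le> f \<eta>" for \<eta>
    unfolding f_def using rate_nonneg hitprob_nonneg by (rule mult_nonneg_nonneg)
  have f_pos: "0 < f \<eta> \<longleftrightarrow> 0 < rate P {\<eta>} \<and> hits Pst P' {\<eta>}" for \<eta>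
    unfolding f_def hitprob_pos_iff[symmetric]
    using rate_nonneg[of P "{\<eta>}"] hitprob_nonneg[of Pst P' "{\<eta>}"] by (simp add: zero_less_mult_iff)
  have "0 < sum f \<Delta> \<longleftrightarrow> (\<exists>\<eta>\<in>\<Delta>. 0 < f \<eta>)"
  proof
    assume "0 < sum f \<Delta>"
    show "\<exists>\<eta>\<in>\<Delta>. 0 < f \<eta>"
    proof (rule ccontr)
      assume "\<not> (\<exists>\<eta>\<in>\<Delta>. 0 < f \<eta>)"
      then have "sum f \<Delta> \<le> 0" by (intro sum_nonpos) (auto simp: not_less)
      then show False using \<open>0 < sum f \<Delta>\<close> by simp
    qed
  next
    assume "\<exists>\<eta>\<in>\<Delta>. 0 < f \<eta>"
    then obtain \<eta> where "\<eta> \<in> \<Delta>" "0 < f \<eta>" by blast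
    moreover have "f \<eta> \<le> sum f \<Delta>" using \<open>\<eta> \<in> \<Delta>\<close> f_nonneg by (intro member_le_sum) auto
    ultimately show "0 < sum f \<Delta>" by linarith
  qed
  then show ?thesis unfolding trate_def f_def[symmetric] using f_pos by simp
qed

lemma exit_level_le:
  assumes "C \<in> Cc" "g \<in> Fmin H C" "\<eta> \<in> \<Delta>" "0 < rate (Fmin H C) {\<eta>}"
  shows "H \<eta> \<le> H g + G"
proof -
  have "H g = Min (H ` C)" using assms(2) by (simp add: Fmin_iff)
  then show ?thesis using rate_bottom_point_posD[OF assms(3,1,4)] by linarith
qed

lemma ground_in_Fmin_if_exit_level_le:
  assumes C: "C \<in> Cstar E H Cc G" and g: "g \<in> ground H"
    and \<eta>: "\<eta> \<in> \<Delta>" "0 < rate (Fmin H C) {\<eta>}" "H \<eta> \<le> H g + G"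
  obtains z where "z \<in> Fmin H C" "z \<in> ground H"
proof -
  have Cc: "C \<in> Cc" using C by (rule Cstar_in_cycles)
  then have "C \<noteq> {}" using cycles_nonempty by auto
  then obtain z where z: "z \<in> C" "H z = Min (H ` C)" using Min_image_attained[of C H] by auto
  have "Min (H ` C) + G \<le> H \<eta>"
    using Cstar_gap[OF C rate_bottom_point_posD(1)[OF \<eta>(1) Cc \<eta>(2)]] .
  then have "H z \<le> H g" using z(2) \<eta>(3) by linarith
  then have "z \<in> ground H" using g by (rule ground_if_le)
  then show ?thesis using that ground_in_Fmin[OF _ z(1)] by blast
qed

text \<open>The key step: an exit from a bottom containing a ground state is at the lowest saddle,
  at level \<open>H g + G\<close>, and the chain can come back along the same level.\<close>
lemma treach_from_ground_reversible:
  assumes XY: "(X, Y) \<in> treach E H Cc G" and g: "g \<in> X" "g \<in> ground H"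
  shows "(Y, X) \<in> treach E H Cc G" "\<exists>z\<in>Y. z \<in> ground H"
proof -
  have XA: "X \<in> Pst" and YA: "Y \<in> Pst" and "X \<noteq> Y" and "0 < trate E H Cc G X Y"
    using XY unfolding treach_def by auto
  obtain CX where CX: "CX \<in> Cstar E H Cc G" "X = Fmin H CX" using XA unfolding Pstar_def by auto
  obtain CY where CY: "CY \<in> Cstar E H Cc G" "Y = Fmin H CY" using YA unfolding Pstar_def by auto
  have CXc: "CX \<in> Cc" using CX(1) by (rule Cstar_in_cycles)
  obtain \<eta> where \<eta>: "\<eta> \<in> \<Delta>" "0 < rate X {\<eta>}" "hits Pst Y {\<eta>}"
    using \<open>0 < trate E H Cc G X Y\<close> unfolding trate_pos_iff by blast
  have level: "H \<eta> \<le> H g + G" using exit_level_le[OF CXc _ \<eta>(1)] g(1) \<eta>(2) CX(2) by simp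
  have "0 < rate {\<eta>} X"
    using rate_point_bottom_pos_iff[OF \<eta>(1) CXc] rate_bottom_point_posD(1)[OF \<eta>(1) CXc] \<eta>(2) CX(2)
    by simp
  moreover have "X \<in> cstates E H Cc" using Fmin_in_cstates[OF CXc] CX(2) by simp
  ultimately have "hits Pst X {\<eta>}"
    using hits_backward[OF XA singleton_notin_Pstar[OF \<eta>(1)] _ _ hits_target] by simp
  moreover obtain n where "0 < hit Pst Y n {\<eta>}" using \<eta>(3) unfolding hits_def by blast
  ultimately obtain \<eta>' where \<eta>': "\<eta>' \<in> \<Delta>" "H \<eta>' \<le> H g + G" "0 < rate Y {\<eta>'}"
      "hits Pst X {\<eta>'}"
    using hit_Cstar_reversible[OF CY(1) g(2) XA \<eta>(1) level] unfolding CY(2) by blast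
  then have "0 < trate E H Cc G Y X" unfolding trate_pos_iff by blast
  then show "(Y, X) \<in> treach E H Cc G" using XA YA \<open>X \<noteq> Y\<close> unfolding treach_def by auto
  show "\<exists>z\<in>Y. z \<in> ground H"
    using ground_in_Fmin_if_exit_level_le[OF CY(1) g(2) \<eta>'(1) _ \<eta>'(2)] \<eta>'(3) CY(2) by blast
qed

lemma Fmin_Cstar_recurrent:
  assumes C: "C \<in> Cstar E H Cc G" and s: "s \<in> C" "s \<in> ground H"
  shows "Fmin H C \<in> Prec E H Cc G"
proof -
  have "(\<exists>z\<in>P. z \<in> ground H) \<and> (P, Fmin H C) \<in> (treach E H Cc G)\<^sup>*"
    if "(Fmin H C, P) \<in> (treach E H Cc G)\<^sup>*" for P
    using that
  proof (induction rule: rtrancl_induct)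
    case base
    show ?case using ground_in_Fmin[OF s(2,1)] s(2) by auto
  next
    case (step Y Z)
    obtain z where z: "z \<in> Y" "z \<in> ground H" using step.IH by blast
    have "(Y, Fmin H C) \<in> (treach E H Cc G)\<^sup>*" using step.IH by blast
    with treach_from_ground_reversible(1)[OF step(2) z]
    have "(Z, Fmin H C) \<in> (treach E H Cc G)\<^sup>*" by (rule converse_rtrancl_into_rtrancl)
    then show ?case using treach_from_ground_reversible(2)[OF step(2) z] by blast
  qed
  then show ?thesis unfolding Prec_def using Fmin_in_Pstar[OF C] by blast
qed

lemma treach_rtrancl_in_Pstar: "(P, P') \<in> (treach E H Cc G)\<^sup>* \<Longrightarrow> P \<in> Pst \<Longrightarrow> P' \<in> Pst"
  by (erule rtranclE) (auto simp: treach_def)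

lemma closed_classesE:
  assumes "K \<in> closed_classes E H Cc G"
  obtains P where "P \<in> Prec E H Cc G"
    "K = {P'. (P, P') \<in> (treach E H Cc G)\<^sup>* \<and> (P', P) \<in> (treach E H Cc G)\<^sup>*}"
  using assms unfolding closed_classes_def by blast

lemma closed_class_subset: "K \<in> closed_classes E H Cc G \<Longrightarrow> K \<subseteq> Pst"
  by (erule closed_classesE) (auto simp: Prec_def intro: treach_rtrancl_in_Pstar)

lemma closed_class_nonempty: "K \<in> closed_classes E H Cc G \<Longrightarrow> K \<noteq> {}"
  by (erule closed_classesE) auto

lemma closed_class_subset_if_meet:
  assumes "K1 \<in> closed_classes E H Cc G" "K2 \<in> closed_classes E H Cc G" "Q \<in> K1" "Q \<in> K2"
  shows "K1 \<subseteq> K2"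
proof
  let ?R = "(treach E H Cc G)\<^sup>*"
  obtain P1 where K1: "K1 = {P'. (P1, P') \<in> ?R \<and> (P', P1) \<in> ?R}"
    using assms(1) by (rule closed_classesE)
  obtain P2 where K2: "K2 = {P'. (P2, P') \<in> ?R \<and> (P', P2) \<in> ?R}"
    using assms(2) by (rule closed_classesE)
  have Q: "(P1, Q) \<in> ?R" "(Q, P1) \<in> ?R" "(P2, Q) \<in> ?R" "(Q, P2) \<in> ?R"
    using assms(3,4) unfolding K1 K2 by auto
  fix x assume "x \<in> K1"
  then have x: "(P1, x) \<in> ?R" "(x, P1) \<in> ?R" unfolding K1 by auto
  have "(P2, x) \<in> ?R" using rtrancl_trans[OF rtrancl_trans[OF Q(3) Q(2)] x(1)] .
  moreover have "(x, P2) \<in> ?R" using rtrancl_trans[OF rtrancl_trans[OF x(2) Q(1)] Q(4)] .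
  ultimately show "x \<in> K2" unfolding K2 by simp
qed

lemma closed_class_eq:
  assumes "K1 \<in> closed_classes E H Cc G" "K2 \<in> closed_classes E H Cc G" "Q \<in> K1" "Q \<in> K2"
  shows "K1 = K2"
  using closed_class_subset_if_meet[OF assms] closed_class_subset_if_meet[OF assms(2,1,4,3)] by simp

lemma PstarE:
  assumes "Q \<in> Pst"
  obtains C where "C \<in> Cc" "Q = Fmin H C" "Q \<noteq> {}"
proof -
  obtain C where C: "C \<in> Cstar E H Cc G" "Q = Fmin H C" using assms unfolding Pstar_def by blast
  have "C \<in> Cc" using C(1) by (rule Cstar_in_cycles)
  moreover have "C \<noteq> {}" using \<open>C \<in> Cc\<close> cycles_nonempty by auto
  ultimately show ?thesis using that C(2) Fmin_nonempty by blast
qed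

lemma Pstar_disjoint:
  assumes Q: "Q1 \<in> Pst" "Q2 \<in> Pst" "x \<in> Q1" "x \<in> Q2"
  shows "Q1 = Q2"
proof -
  obtain C1 where C1: "C1 \<in> Cc" "Q1 = Fmin H C1" using Q(1) by (rule PstarE)
  obtain C2 where C2: "C2 \<in> Cc" "Q2 = Fmin H C2" using Q(2) by (rule PstarE)
  have "x \<in> C1 \<inter> C2" using Q(3,4) C1(2) C2(2) Fmin_subset[of H C1] Fmin_subset[of H C2] by blast
  then have "C1 = C2" using disjointD[OF cycles_disjoint C1(1) C2(1)] by blast
  then show ?thesis using C1 C2 by simp
qed

lemma Union_closed_class_nonempty:
  assumes "K \<in> closed_classes E H Cc G"
  shows "\<Union>K \<noteq> {}"
proof -
  obtain Q where "Q \<in> K" using closed_class_nonempty[OF assms] by blast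
  moreover have "Q \<noteq> {}" using closed_class_subset[OF assms] \<open>Q \<in> K\<close> PstarE by blast
  ultimately show ?thesis by blast
qed

lemma Union_closed_class_eq:
  assumes "K1 \<in> closed_classes E H Cc G" "K2 \<in> closed_classes E H Cc G" "x \<in> \<Union>K1" "x \<in> \<Union>K2"
  shows "K1 = K2"
proof -
  obtain Q1 Q2 where Q: "Q1 \<in> K1" "Q2 \<in> K2" "x \<in> Q1" "x \<in> Q2" using assms(3,4) by blast
  have "Q1 \<in> Pst" "Q2 \<in> Pst" using closed_class_subset assms(1,2) Q(1,2) by blast+
  then have "Q1 = Q2" using Pstar_disjoint Q(3,4) by blast
  then show ?thesis using closed_class_eq[OF assms(1,2) Q(1)] Q(2) by simp
qed

lemma Prec_in_closed_class:
  assumes "P \<in> Prec E H Cc G"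
  obtains K where "K \<in> closed_classes E H Cc G" "P \<in> K"
proof
  let ?K = "{P'. (P, P') \<in> (treach E H Cc G)\<^sup>* \<and> (P', P) \<in> (treach E H Cc G)\<^sup>*}"
  show "?K \<in> closed_classes E H Cc G" unfolding closed_classes_def using assms by blast
  show "P \<in> ?K" by simp
qed

lemma Cstar_separation:
  assumes C: "C \<in> Cstar E H Cc G" and p: "p \<in> Fmin H C" and q: "q \<notin> C"
  shows "H p + G \<le> Phi E H p q"
proof -
  have "p \<in> C" "H p = Min (H ` C)" using p by (simp_all add: Fmin_iff)
  obtain b where "b \<in> bd E C" "H b \<le> Phi E H p q"
    using Phi_ge_boundary[OF \<open>p \<in> C\<close> q] .
  then show ?thesis using Cstar_gap[OF C \<open>b \<in> bd E C\<close>] \<open>H p = Min (H ` C)\<close> by linarith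
qed

end

section \<open>The hierarchy\<close>

definition next_plateaux :: "('a \<Rightarrow> 'a \<Rightarrow> bool) \<Rightarrow> ('a \<Rightarrow> real) \<Rightarrow> 'a set set \<Rightarrow> 'a set set \<Rightarrow> 'a set set"
  where "next_plateaux E H Cc Ps = Union ` closed_classes E H Cc (Gstar E H Ps)"

definition next_cycles :: "('a \<Rightarrow> 'a \<Rightarrow> bool) \<Rightarrow> ('a \<Rightarrow> real) \<Rightarrow> 'a set set \<Rightarrow> 'a set set \<Rightarrow> 'a set set"
  where "next_cycles E H Cc Ps =
    (let Ps' = next_plateaux E H Cc Ps; G = Gstar E H Ps
     in Vset E H Ps' ` Ps' \<union> {C \<in> Ctr E H Cc G \<union> Csharp E H Cc G. \<forall>P\<in>Ps'. C \<inter> Vset E H Ps' P = {}})"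

lemma lev_Suc_Suc:
  "levP E H (Suc (Suc n)) = next_plateaux E H (levC E H (Suc n)) (levP E H (Suc n))"
  "levC E H (Suc (Suc n)) = next_cycles E H (levC E H (Suc n)) (levP E H (Suc n))"
proof -
  obtain Ps Cc where eq: "lev E H (Suc n) = (Ps, Cc)" by (cases "lev E H (Suc n)")
  have "levP E H (Suc n) = Ps" "levC E H (Suc n) = Cc" unfolding levP_def levC_def using eq by simp_all
  then show "levP E H (Suc (Suc n)) = next_plateaux E H (levC E H (Suc n)) (levP E H (Suc n))"
    "levC E H (Suc (Suc n)) = next_cycles E H (levC E H (Suc n)) (levP E H (Suc n))"
    unfolding levP_def levC_def next_plateaux_def next_cycles_def using eq by (simp_all add: Let_def)
qed

locale hierarchy_level = collapsed_chain E H Cc "Gstar E H Ps"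
  for E :: "'a::finite \<Rightarrow> 'a \<Rightarrow> bool" and H Cc Ps +
  fixes s :: 'a
  assumes ground_state: "s \<in> ground H"
    and two_plateaux: "2 \<le> card Ps"
    and plateaux_nonempty: "{} \<notin> Ps"
    and plateaux_disjoint: "disjoint Ps"
    and Gam_pos: "\<And>P. P \<in> Ps \<Longrightarrow> 0 < Gam E H Ps P"
    and valleys_in_cycles: "Vset E H Ps ` Ps \<subseteq> Cc"
    and ground_state_covered: "\<exists>P\<in>Ps. s \<in> P"
begin

lemma finite_plateaux: "finite Ps"
  using two_plateaux by (intro card_ge_0_finite) simp

lemma Gstar_level_pos: "0 < Gstar E H Ps"
proof (rule Gstar_pos[OF finite_plateaux])
  show "Ps \<noteq> {}" using two_plateaux by auto
qed (rule Gam_pos)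

lemma ground_state_recurrent: "\<exists>P\<in>Prec E H Cc (Gstar E H Ps). s \<in> P"
proof -
  obtain P where P: "P \<in> Ps" "s \<in> P" using ground_state_covered by blast
  have "P \<noteq> {}" "0 < Gam E H Ps P" using P plateaux_nonempty Gam_pos by auto
  have "H s \<le> Hm H P" unfolding Hm_def using ground_le_Min[OF ground_state \<open>P \<noteq> {}\<close>] .
  then have sV: "s \<in> Vset E H Ps P" using mem_Vset_if_le_Hm P(2) \<open>0 < Gam E H Ps P\<close> by blast
  have "ereal (Gstar E H Ps) \<le> ereal (Gam E H Ps P)"
    using Gstar_le_Gam[OF P(1) finite_plateaux] by simp
  also have "\<dots> \<le> depth E H (Vset E H Ps P)"
    by (rule depth_Vset_ge[OF \<open>P \<noteq> {}\<close> \<open>0 < Gam E H Ps P\<close>])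
  finally have "Vset E H Ps P \<in> Cstar E H Cc (Gstar E H Ps)"
    unfolding Cstar_def using valleys_in_cycles P(1) by auto
  then have "Fmin H (Vset E H Ps P) \<in> Prec E H Cc (Gstar E H Ps)"
    using Fmin_Cstar_recurrent sV ground_state by simp
  moreover have "s \<in> Fmin H (Vset E H Ps P)" using ground_in_Fmin[OF ground_state sV] .
  ultimately show ?thesis by blast
qed

lemma next_plateauE:
  assumes "P \<in> next_plateaux E H Cc Ps" "x \<in> P"
  obtains K C where "K \<in> closed_classes E H Cc (Gstar E H Ps)" "P = \<Union>K"
    "C \<in> Cstar E H Cc (Gstar E H Ps)" "Fmin H C \<in> K" "x \<in> Fmin H C"
proof -
  obtain K where K: "K \<in> closed_classes E H Cc (Gstar E H Ps)" "P = \<Union>K"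
    using assms(1) unfolding next_plateaux_def by blast
  then obtain Q where Q: "Q \<in> K" "x \<in> Q" using assms(2) by blast
  then have "Q \<in> Pstar E H Cc (Gstar E H Ps)" using closed_class_subset[OF K(1)] by blast
  then obtain C where "C \<in> Cstar E H Cc (Gstar E H Ps)" "Q = Fmin H C" unfolding Pstar_def by blast
  then show ?thesis using that K Q by blast
qed

lemma next_plateaux_nonempty: "{} \<notin> next_plateaux E H Cc Ps"
proof
  assume "{} \<in> next_plateaux E H Cc Ps"
  then obtain K where "K \<in> closed_classes E H Cc (Gstar E H Ps)" "\<Union>K = {}"
    unfolding next_plateaux_def by auto
  then show False using Union_closed_class_nonempty by blast
qed

lemma next_plateaux_eq:
  assumes "P \<in> next_plateaux E H Cc Ps" "P' \<in> next_plateaux E H Cc Ps" "x \<in> P" "x \<in> P'"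
  shows "P = P'"
proof -
  obtain K K' where K: "K \<in> closed_classes E H Cc (Gstar E H Ps)" "P = \<Union>K"
    and K': "K' \<in> closed_classes E H Cc (Gstar E H Ps)" "P' = \<Union>K'"
    using assms(1,2) unfolding next_plateaux_def by blast
  then have "K = K'" using Union_closed_class_eq[OF K(1) K'(1)] assms(3,4) by simp
  then show ?thesis using K(2) K'(2) by simp
qed

lemma next_plateaux_disjoint: "disjoint (next_plateaux E H Cc Ps)"
proof (rule disjointI)
  fix P P' assume "P \<in> next_plateaux E H Cc Ps" "P' \<in> next_plateaux E H Cc Ps" "P \<noteq> P'"
  then show "P \<inter> P' = {}" using next_plateaux_eq by blast
qed

lemma card_next_plateaux: "card (next_plateaux E H Cc Ps) = card (closed_classes E H Cc (Gstar E H Ps))"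
  unfolding next_plateaux_def
proof (rule card_image, rule inj_onI)
  fix K1 K2 assume K: "K1 \<in> closed_classes E H Cc (Gstar E H Ps)" "K2 \<in> closed_classes E H Cc (Gstar E H Ps)"
    "\<Union>K1 = \<Union>K2"
  obtain x where "x \<in> \<Union>K1" using Union_closed_class_nonempty[OF K(1)] by blast
  then show "K1 = K2" using Union_closed_class_eq[OF K(1,2)] K(3) by simp
qed

lemma Cstar_avoids_other_next_plateaux:
  assumes P: "P \<in> next_plateaux E H Cc Ps" "P' \<in> next_plateaux E H Cc Ps" "P \<noteq> P'"
    and C: "C \<in> Cstar E H Cc (Gstar E H Ps)" "Fmin H C \<subseteq> P" and q: "q \<in> P'"
  shows "q \<notin> C"
proof
  assume "q \<in> C"
  obtain K' C' where C': "K' \<in> closed_classes E H Cc (Gstar E H Ps)" "P' = \<Union>K'"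
      "C' \<in> Cstar E H Cc (Gstar E H Ps)" "Fmin H C' \<in> K'" "q \<in> Fmin H C'"
    by (rule next_plateauE[OF P(2) q])
  have "q \<in> C'" using C'(5) Fmin_subset[of H C'] by blast
  have "C = C'"
  proof (rule ccontr)
    assume "C \<noteq> C'"
    then have "C \<inter> C' = {}"
      using disjointD[OF cycles_disjoint Cstar_in_cycles[OF C(1)] Cstar_in_cycles[OF C'(3)]] by simp
    then show False using \<open>q \<in> C\<close> \<open>q \<in> C'\<close> by blast
  qed
  have "x \<in> P'" if "x \<in> Fmin H C" for x using that C'(2,4) \<open>C = C'\<close> by blast
  then have "Fmin H C \<subseteq> P \<inter> P'" using C(2) by blast
  moreover have "P \<inter> P' = {}" using disjointD[OF next_plateaux_disjoint P] .
  moreover have "C \<noteq> {}" using Cstar_in_cycles[OF C(1)] cycles_nonempty by auto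
  then have "Fmin H C \<noteq> {}" by (rule Fmin_nonempty)
  ultimately show False by simp
qed

lemma Gstar_le_Gam_next:
  assumes card: "2 \<le> card (next_plateaux E H Cc Ps)" and P: "P \<in> next_plateaux E H Cc Ps"
  shows "Gstar E H Ps \<le> Gam E H (next_plateaux E H Cc Ps) P"
proof -
  let ?Ps' = "next_plateaux E H Cc Ps"
  have "P \<noteq> {}" using P next_plateaux_nonempty by auto
  have "Hm H P + Gstar E H Ps \<le> PhiS E H P (\<Union> (?Ps' - {P}))"
  proof (rule PhiS_greatest[OF \<open>P \<noteq> {}\<close> Union_others_nonempty[OF card P next_plateaux_nonempty]])
    fix p q assume p: "p \<in> P" and "q \<in> \<Union> (?Ps' - {P})"
    then obtain P' where P': "P' \<in> ?Ps'" "P' \<noteq> P" "q \<in> P'" by blast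
    obtain K C where C: "K \<in> closed_classes E H Cc (Gstar E H Ps)" "P = \<Union>K"
        "C \<in> Cstar E H Cc (Gstar E H Ps)" "Fmin H C \<in> K" "p \<in> Fmin H C"
      by (rule next_plateauE[OF P p])
    have "P \<noteq> P'" using P'(2) by simp
    moreover have "Fmin H C \<subseteq> P" using C(2,4) by blast
    ultimately have "q \<notin> C" using Cstar_avoids_other_next_plateaux[OF P P'(1) _ C(3) _ P'(3)] by simp
    then have "H p + Gstar E H Ps \<le> Phi E H p q" by (rule Cstar_separation[OF C(3,5)])
    then show "Hm H P + Gstar E H Ps \<le> Phi E H p q" using Hm_le[OF p] by linarith
  qed
  then show ?thesis unfolding Gam_def by linarith
qed

lemma next_level:
  assumes "2 \<le> card (closed_classes E H Cc (Gstar E H Ps))"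
  shows "hierarchy_level E H (next_cycles E H Cc Ps) (next_plateaux E H Cc Ps) s"
proof -
  let ?Ps' = "next_plateaux E H Cc Ps" and ?G = "Gstar E H Ps"
  have card: "2 \<le> card ?Ps'" using assms card_next_plateaux by simp
  have Gam: "0 < Gam E H ?Ps' P" if "P \<in> ?Ps'" for P
    using Gstar_le_Gam_next[OF card that] Gstar_level_pos by linarith
  have old: "{} \<notin> Ctr E H Cc ?G \<union> Csharp E H Cc ?G" "disjoint (Ctr E H Cc ?G \<union> Csharp E H Cc ?G)"
    using cycles_nonempty pairwise_subset[OF cycles_disjoint]
    unfolding Ctr_def Csharp_def Cstar_def by auto
  note cycles = valleys_with_old_cycles[OF next_plateaux_nonempty Gam old]
  obtain X where X: "X \<in> Prec E H Cc ?G" "s \<in> X" using ground_state_recurrent by blast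
  obtain K where "K \<in> closed_classes E H Cc ?G" "X \<in> K" using X(1) by (rule Prec_in_closed_class)
  then have covered: "\<exists>P\<in>?Ps'. s \<in> P" using X(2) unfolding next_plateaux_def by blast
  have "{} \<notin> next_cycles E H Cc Ps" "disjoint (next_cycles E H Cc Ps)"
    using cycles unfolding next_cycles_def Let_def by simp_all
  moreover have "Vset E H ?Ps' ` ?Ps' \<subseteq> next_cycles E H Cc Ps"
    unfolding next_cycles_def Let_def by blast
  ultimately show ?thesis
    using sym connected ground_state card next_plateaux_nonempty next_plateaux_disjoint Gam covered
    by unfold_locales
qed

end

context landscape
begin

lemma hierarchy_level_first:
  assumes s: "s \<in> ground H" and two: "2 \<le> card (plateaux1 E H)"
  shows "hierarchy_level E H (Vset E H (plateaux1 E H) ` plateaux1 E H) (plateaux1 E H) s"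
proof -
  let ?Ps = "plateaux1 E H"
  have st: "stable_plateau E H P" if "P \<in> ?Ps" for P using that unfolding plateaux1_def by simp
  have ne: "{} \<notin> ?Ps"
  proof
    assume "{} \<in> ?Ps"
    then show False using stable_plateauD(1)[OF st] by blast
  qed
  have dj: "disjoint ?Ps"
  proof (rule disjointI)
    fix P Q assume PQ: "P \<in> ?Ps" "Q \<in> ?Ps" "P \<noteq> Q"
    show "P \<inter> Q = {}"
    proof (rule ccontr)
      assume "P \<inter> Q \<noteq> {}"
      then obtain x where "x \<in> P" "x \<in> Q" by blast
      then show False using stable_plateaux_eq[OF st[OF PQ(1)] st[OF PQ(2)]] PQ(3) by blast
    qed
  qed
  have Gam: "0 < Gam E H ?Ps P" if "P \<in> ?Ps" for P
    using Gam_stable_plateau_pos[OF st[OF that] that dj Union_others_nonempty[OF two that ne]] .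
  have "Vset E H ?Ps P \<noteq> {}" if "P \<in> ?Ps" for P
    using Vset_nonempty[OF _ Gam[OF that]] ne that by auto
  then have "{} \<notin> Vset E H ?Ps ` ?Ps" by auto
  moreover have "disjoint (Vset E H ?Ps ` ?Ps)" using ne by (rule disjoint_Vset_image)
  moreover obtain P where "P \<in> ?Ps" "s \<in> P" using s by (rule ground_in_plateaux1)
  ultimately show ?thesis
    using sym connected s two ne dj Gam subset_refl[of "Vset E H ?Ps ` ?Ps"] by unfold_locales auto
qed

lemma hierarchy_level_lev:
  assumes s: "s \<in> ground H" and two: "2 \<le> card (plateaux1 E H)"
  shows "1 \<le> h \<Longrightarrow> \<forall>k\<in>{1..<h}. 2 \<le> nu E H k \<Longrightarrow> hierarchy_level E H (levC E H h) (levP E H h) s"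
proof (induction h)
  case 0
  then show ?case by simp
next
  case (Suc h)
  show ?case
  proof (cases h)
    case 0
    then show ?thesis using hierarchy_level_first[OF s two] by (simp add: levP_def levC_def)
  next
    case (Suc n)
    have "hierarchy_level E H (levC E H h) (levP E H h) s" using Suc.IH Suc.prems \<open>h = Suc n\<close> by simp
    moreover have "2 \<le> card (closed_classes E H (levC E H h) (Gstar E H (levP E H h)))"
      using Suc.prems \<open>h = Suc n\<close> unfolding nu_def by simp
    ultimately have "hierarchy_level E H (next_cycles E H (levC E H h) (levP E H h))
        (next_plateaux E H (levC E H h) (levP E H h)) s"
      by (rule hierarchy_level.next_level)
    then show ?thesis using lev_Suc_Suc[of E H n] \<open>h = Suc n\<close> by simp
  qed
qed

end

theorem mainTheorem7:
  fixes E :: "'a::finite \<Rightarrow> 'a \<Rightarrow> bool" and H :: "'a \<Rightarrow> real" and s :: 'a and h :: nat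
  assumes sym: "\<forall>x y. E x y \<longrightarrow> E y x"
    and connected: "\<forall>x y. (x, y) \<in> {(a, b). E a b}\<^sup>*"
    and nu0: "card (plateaux1 E H) \<ge> 2"
    and s: "s \<in> ground H"
    and h1: "1 \<le> h"
    and levels: "\<forall>k\<in>{1..<h}. nu E H k \<ge> 2"
  shows "\<exists>P\<in>Prec_lev E H h. s \<in> P"
proof -
  interpret landscape E H using sym connected by unfold_locales
  have "hierarchy_level E H (levC E H h) (levP E H h) s"
    using hierarchy_level_lev[OF s nu0 h1 levels] .
  then show ?thesis unfolding Prec_lev_def by (rule hierarchy_level.ground_state_recurrent)
qed

end
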